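(* Assume the hypotheses of the geometric setting in the context (including one of the degree conditions (a) or (b)). Let $\mathbf u_h(t)$ be a differentiable-in-time solution, with values in the domain of the entropy, of the semi-discrete system $$M\frac{d\mathbf u_h}{dt}+\sum_{i=1}^d\Big(\begin{bmatrix}I & E^T & E^TE_{mf}^T\end{bmatrix}\big(2Q_{i,m}\circ F_i\big)\mathbf 1+E^TE_{mf}^TB_{i,m}\big(\mathbf f_i^*-\bm f_i(\tilde{\mathbf u}_m)\big)\Big)=0,$$ where $\mathbf f_i^*(t)$ are arbitrary given vectors of mortar-node values (e.g. $\mathbf f^*_{i}=\bm f_{i,S}(\tilde{\mathbf u}_m^+,\tilde{\mathbf u}_m)$ for an exterior state $\tilde{\mathbf u}_m^+$). Then $$\mathbf 1^TM\frac{d S(\mathbf u_h)}{dt}+\sum_{i=1}^d\mathbf 1^TB_{i,m}\Big(\mathbf v_m\cdot\mathbf f_i^*-\psi_i(\tilde{\mathbf u}_m)\Big)=0,$$ where $\mathbf v_m\cdot\mathbf f_i^*$ denotes the vector whose entry at mortar node $a$ is $\bm v_{m,a}^T\bm f^*_{i,a}$, and $S(\mathbf u_h)$, $\psi_i(\tilde{\mathbf u}_m)$ are the vectors of nodal values.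
   Context: Conservation law: $\partial_t\bm u+\sum_{i=1}^d\partial_{x_i}\bm f_i(\bm u)=0$ with $\bm u\in\mathbb R^n$. $S(\bm u)$ is a convex entropy, $\bm v(\bm u)=\partial S/\partial\bm u$ the entropy variables, with inverse map $\bm u(\bm v)$; $\psi_i$ are the entropy potentials. An entropy conservative flux $\bm f_{i,S}(\bm u_L,\bm u_R)$ satisfies $\bm f_{i,S}(\bm u,\bm u)=\bm f_i(\bm u)$, $\bm f_{i,S}(\bm u_L,\bm u_R)=\bm f_{i,S}(\bm u_R,\bm u_L)$, and $(\bm v_L-\bm v_R)^T\bm f_{i,S}(\bm u_L,\bm u_R)=\psi_i(\bm u_L)-\psi_i(\bm u_R)$ with $\bm v_{L/R}=\bm v(\bm u_{L/R})$. Reference operators: fix $d\in\{2,3\}$, $N\ge1$, 1D $(N+1)$-point Gauss or Lobatto nodes $x_k$ with positive weights $w_k$ and Lagrange basis $\ell_k$; $\hat M_{1D}=\mathrm{diag}(w)$, $(\hat Q_{1D})_{jk}=w_j\ell_k'(x_j)$; on $\hat D=[-1,1]^d$ the volume nodes $\hat{\mathbf x}$ form the tensor grid, $\hat M=\hat M_{1D}^{\otimes d}$, $\hat Q_i=A_1\otimes\cdots\otimes A_d$ with $A_i=\hat Q_{1D}$, $A_k=\hat M_{1D}$ ($k\ne i$). Face nodes $\hat{\mathbf x}_f$: on each face $\{\hat x_k=\pm1\}$ the points with $\hat x_k=\pm1$ and other coordinates over the 1D nodes, weights = products of the other coordinates' 1D weights, diagonal $\hat M_f$; $E$ maps volume-node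 values of a $Q^N(\hat D)$ polynomial to its face-node values; $\hat n_i=\pm\delta_{ik}$ on face $\{\hat x_k=\pm1\}$; $\hat B_{i,f}=\mathrm{diag}(\hat{\mathbf n}_{i,f})\hat M_f$. Mortar nodes $\hat{\mathbf x}_m$ on each face with real weights (diagonal $\hat M_m$); $E_{mf}$ block diagonal over faces, interpolating $Q^N$ face polynomials from face nodes to mortar nodes; $E_{fm}=\hat M_f^{-1}E_{mf}^T\hat M_m$; $\hat B_{i,m}=\mathrm{diag}(\hat{\mathbf n}_{i,m})\hat M_m$; $$\hat Q_{i,m}=\frac12\begin{bmatrix}\hat Q_i-\hat Q_i^T & E^T\hat B_{i,f} & 0\\ -\hat B_{i,f}E & 0 & \hat B_{i,f}E_{fm}\\ 0 & -\hat B_{i,m}E_{mf} & \hat B_{i,m}\end{bmatrix}.$$ Geometric setting: $N_f,N_m\ge0$; face quadrature exact for $Q^{N+N_f}$ and mortar quadrature exact for $Q^{N+N_m}$ on each face ($Q^{M}$: tensor polynomials of degree $\le M$ per variable). Polynomials $g_{ij}$ on $\hat D$ satisfy $\sum_j\partial g_{ij}/\partial\hat x_j=0$ and, for some integer $N_{\rm geo}\ge1$, either (a) all $g_{ij}\in Q^{N_{\rm geo}}$ with $N_{\rm geo}\le\min(N,N_f,N_m)$, or (b) $g_{ij}$ has degree $\le N_{\rm geo}$ in $\hat x_j$ and $\le N_{\rm geo}-1$ in other variables, with $N_{\rm geo}\le\min(N,N_f+1,N_m+1)$. $\mathbf g_{ij}$ = values of $g_{ij}$ at volume, face, mortar nodes;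 $Q_{i,m}=\frac12\sum_j(\mathrm{diag}(\mathbf g_{ij})\hat Q_{j,m}+\hat Q_{j,m}\mathrm{diag}(\mathbf g_{ij}))$; $\mathbf n_{i,m}=\sum_j g_{ij}(\hat{\mathbf x}_m)\circ\hat{\mathbf n}_{j,m}$; $B_{i,m}=\mathrm{diag}(\mathbf n_{i,m})\hat M_m$. $M=\hat M\,\mathrm{diag}(\mathbf J)$ with $\mathbf J$ positive Jacobian values at volume nodes. Discrete quantities: $\mathbf u_h$ holds the state ($\in\mathbb R^n$) at each volume node; all matrices act node-wise (tensored with $I_n$). $\mathbf v_f=E\,\bm v(\mathbf u_h)$, $\mathbf v_m=E_{mf}\mathbf v_f$, $\tilde{\mathbf u}_f=\bm u(\mathbf v_f)$, $\tilde{\mathbf u}_m=\bm u(\mathbf v_m)$, and $\tilde{\mathbf u}=[\mathbf u_h;\tilde{\mathbf u}_f;\tilde{\mathbf u}_m]$ indexed by all volume, face and mortar nodes. The Hadamard-product term is defined entrywise: the $j$-th entry of $(2Q_{i,m}\circ F_i)\mathbf 1$ is $\sum_k 2(Q_{i,m})_{jk}\,\bm f_{i,S}(\tilde{\mathbf u}_j,\tilde{\mathbf u}_k)$. $\bm f_i(\tilde{\mathbf u}_m)$ is the nodewise flux at mortar nodes. *)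

theory Defs
  imports "HOL-Analysis.Analysis" "HOL-Computational_Algebra.Polynomial"
begin

text \<open>The (N+1)-point Gauss rule: interior strictly increasing nodes, positive weights,
  exact for polynomials of degree at most 2N+1 (this determines the rule uniquely).\<close>
definition gauss_rule :: "nat \<Rightarrow> (nat \<Rightarrow> real) \<Rightarrow> (nat \<Rightarrow> real) \<Rightarrow> bool" where
  "gauss_rule N x w \<longleftrightarrow> strict_mono_on {..N} x \<and> (\<forall>k\<le>N. -1 < x k \<and> x k < 1 \<and> 0 < w k) \<and>
     (\<forall>p::real poly. degree p \<le> 2*N+1 \<longrightarrow>
        (\<Sum>k\<le>N. w k * poly p (x k)) = integral {-1..1} (poly p))"

text \<open>The (N+1)-point Gauss-Lobatto rule: strictly increasing nodes containing the endpoints,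
  positive weights, exact for polynomials of degree at most 2N-1 (unique such rule).\<close>
definition lobatto_rule :: "nat \<Rightarrow> (nat \<Rightarrow> real) \<Rightarrow> (nat \<Rightarrow> real) \<Rightarrow> bool" where
  "lobatto_rule N x w \<longleftrightarrow> strict_mono_on {..N} x \<and> x 0 = -1 \<and> x N = 1 \<and> (\<forall>k\<le>N. 0 < w k) \<and>
     (\<forall>p::real poly. degree p \<le> 2*N-1 \<longrightarrow>
        (\<Sum>k\<le>N. w k * poly p (x k)) = integral {-1..1} (poly p))"

definition lag :: "nat \<Rightarrow> (nat \<Rightarrow> real) \<Rightarrow> nat \<Rightarrow> real \<Rightarrow> real" where
  "lag N x k t = (\<Prod>m\<in>{..N}-{k}. (t - x m) / (x k - x m))"

definition Q1D :: "nat \<Rightarrow> (nat \<Rightarrow> real) \<Rightarrow> (nat \<Rightarrow> real) \<Rightarrow> nat \<Rightarrow> nat \<Rightarrow> real" where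
  "Q1D N x w j k = w j * deriv (lag N x k) (x j)"

section \<open>Tensor-product polynomials on R^d (points are nat => real, coordinates 0..d-1)\<close>

definition midx :: "nat \<Rightarrow> (nat \<Rightarrow> nat) \<Rightarrow> (nat \<Rightarrow> nat) set" where
  "midx d Dg = {\<alpha>. \<forall>l. (l < d \<longrightarrow> \<alpha> l \<le> Dg l) \<and> (d \<le> l \<longrightarrow> \<alpha> l = 0)}"

text \<open>p has degree at most Dg l in variable l (l < d).  Q^M is tpoly d (\<lambda>_. M).\<close>
definition tpoly :: "nat \<Rightarrow> (nat \<Rightarrow> nat) \<Rightarrow> ((nat \<Rightarrow> real) \<Rightarrow> real) \<Rightarrow> bool" where
  "tpoly d Dg p \<longleftrightarrow> (\<exists>c. \<forall>y. p y = (\<Sum>\<alpha>\<in>midx d Dg. c \<alpha> * (\<Prod>l<d. y l ^ \<alpha> l)))"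

fun iint :: "nat list \<Rightarrow> ((nat \<Rightarrow> real) \<Rightarrow> real) \<Rightarrow> (nat \<Rightarrow> real) \<Rightarrow> real" where
  "iint [] p y = p y"
| "iint (l # ls) p y = integral {-1..1} (\<lambda>t. iint ls p (y(l := t)))"

definition sgnb :: "bool \<Rightarrow> real" where
  "sgnb s = (if s then 1 else -1)"

text \<open>Integral over the face {x_k = +-1} of the reference cube [-1,1]^d.\<close>
definition face_int :: "nat \<Rightarrow> nat \<Rightarrow> bool \<Rightarrow> ((nat \<Rightarrow> real) \<Rightarrow> real) \<Rightarrow> real" where
  "face_int d k s p = iint (filter (\<lambda>l. l \<noteq> k) [0..<d]) p (\<lambda>l. if l = k then sgnb s else 0)"

record disc =
  dim :: nat
  deg :: nat
  xs :: "nat \<Rightarrow> real"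
  ws :: "nat \<Rightarrow> real"
  nmor :: "nat \<Rightarrow> bool \<Rightarrow> nat"
  xmor :: "nat \<Rightarrow> bool \<Rightarrow> nat \<Rightarrow> nat \<Rightarrow> real"
  wmor :: "nat \<Rightarrow> bool \<Rightarrow> nat \<Rightarrow> real"

text \<open>Volume node (multi-index), face node on face {x_k = sgnb s} (multi-index with entry k = 0),
  mortar node number j on face {x_k = sgnb s}.\<close>
datatype node = VN "nat \<Rightarrow> nat" | FN nat bool "nat \<Rightarrow> nat" | MN nat bool nat

definition vol_nodes :: "disc \<Rightarrow> node set" where
  "vol_nodes D = VN ` midx (dim D) (\<lambda>_. deg D)"

definition fidx :: "nat \<Rightarrow> nat \<Rightarrow> nat \<Rightarrow> (nat \<Rightarrow> nat) set" where
  "fidx d N k = {b. \<forall>l. (l < d \<and> l \<noteq> k \<longrightarrow> b l \<le> N) \<and> ((d \<le> l \<or> l = k) \<longrightarrow> b l = 0)}"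

definition face_nodes_of :: "disc \<Rightarrow> nat \<Rightarrow> bool \<Rightarrow> node set" where
  "face_nodes_of D k s = FN k s ` fidx (dim D) (deg D) k"

definition face_nodes :: "disc \<Rightarrow> node set" where
  "face_nodes D = (\<Union>k<dim D. \<Union>s. face_nodes_of D k s)"

definition mortar_nodes_of :: "disc \<Rightarrow> nat \<Rightarrow> bool \<Rightarrow> node set" where
  "mortar_nodes_of D k s = MN k s ` {..<nmor D k s}"

definition mortar_nodes :: "disc \<Rightarrow> node set" where
  "mortar_nodes D = (\<Union>k<dim D. \<Union>s. mortar_nodes_of D k s)"

definition all_nodes :: "disc \<Rightarrow> node set" where
  "all_nodes D = vol_nodes D \<union> face_nodes D \<union> mortar_nodes D"

fun pt :: "disc \<Rightarrow> node \<Rightarrow> nat \<Rightarrow> real" where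
  "pt D (VN a) = (\<lambda>l. xs D (a l))"
| "pt D (FN k s b) = (\<lambda>l. if l = k then sgnb s else xs D (b l))"
| "pt D (MN k s j) = xmor D k s j"

text \<open>Quadrature weights: diagonals of \<open>\<hat>M\<close>, \<open>\<hat>M_f\<close>, \<open>\<hat>M_m\<close>.\<close>
fun wt :: "disc \<Rightarrow> node \<Rightarrow> real" where
  "wt D (VN a) = (\<Prod>l<dim D. ws D (a l))"
| "wt D (FN k s b) = (\<Prod>l\<in>{..<dim D}-{k}. ws D (b l))"
| "wt D (MN k s j) = wmor D k s j"

type_synonym nmat = "node \<Rightarrow> node \<Rightarrow> real"

definition mmul :: "disc \<Rightarrow> nmat \<Rightarrow> nmat \<Rightarrow> nmat" where
  "mmul D A B = (\<lambda>a c. \<Sum>b\<in>all_nodes D. A a b * B b c)"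

definition mtr :: "nmat \<Rightarrow> nmat" where
  "mtr A = (\<lambda>a b. A b a)"

text \<open>Volume block \<open>\<hat>Q_i = A_1 \<otimes> ... \<otimes> A_d\<close>, \<open>A_i = \<hat>Q_1D\<close>, \<open>A_l = \<hat>M_1D\<close>.\<close>
fun Qvol :: "disc \<Rightarrow> nat \<Rightarrow> nmat" where
  "Qvol D i (VN a) (VN b) =
     (if VN a \<in> vol_nodes D \<and> VN b \<in> vol_nodes D
      then Q1D (deg D) (xs D) (ws D) (a i) (b i) *
           (\<Prod>l\<in>{..<dim D}-{i}. if a l = b l then ws D (a l) else 0)
      else 0)"
| "Qvol D i _ _ = 0"

text \<open>Interpolation E from volume nodes to face nodes (supported on face x volume).\<close>
fun Emat :: "disc \<Rightarrow> nmat" where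
  "Emat D (FN k s b) (VN a) =
     (if FN k s b \<in> face_nodes D \<and> VN a \<in> vol_nodes D
      then lag (deg D) (xs D) (a k) (sgnb s) * (if \<forall>l<dim D. l \<noteq> k \<longrightarrow> a l = b l then 1 else 0)
      else 0)"
| "Emat D _ _ = 0"

text \<open>Interpolation E_mf from face nodes to mortar nodes, block diagonal over faces.\<close>
fun Emf :: "disc \<Rightarrow> nmat" where
  "Emf D (MN k s j) (FN k' s' b) =
     (if MN k s j \<in> mortar_nodes D \<and> FN k' s' b \<in> face_nodes D \<and> k = k' \<and> s = s'
      then (\<Prod>l\<in>{..<dim D}-{k}. lag (deg D) (xs D) (b l) (xmor D k s j l))
      else 0)"
| "Emf D _ _ = 0"

text \<open>E_fm = M_f^{-1} E_mf^T M_m.\<close>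
definition Efm :: "disc \<Rightarrow> nmat" where
  "Efm D = (\<lambda>a c. if a \<in> face_nodes D \<and> c \<in> mortar_nodes D
                  then (1 / wt D a) * Emf D c a * wt D c else 0)"

fun nhat :: "nat \<Rightarrow> node \<Rightarrow> real" where
  "nhat i (VN a) = 0"
| "nhat i (FN k s b) = (if i = k then sgnb s else 0)"
| "nhat i (MN k s j) = (if i = k then sgnb s else 0)"

definition Bf :: "disc \<Rightarrow> nat \<Rightarrow> nmat" where
  "Bf D i = (\<lambda>a b. if a = b \<and> a \<in> face_nodes D then nhat i a * wt D a else 0)"

definition Bm :: "disc \<Rightarrow> nat \<Rightarrow> nmat" where
  "Bm D i = (\<lambda>a b. if a = b \<and> a \<in> mortar_nodes D then nhat i a * wt D a else 0)"

text \<open>The block matrix \<open>\<hat>Q_{i,m}\<close>, written as the sum of its (block-supported) blocks.\<close>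
definition Qhat :: "disc \<Rightarrow> nat \<Rightarrow> nmat" where
  "Qhat D i = (\<lambda>a b. (1/2) *
     (Qvol D i a b - Qvol D i b a
      + mmul D (mtr (Emat D)) (Bf D i) a b
      - mmul D (Bf D i) (Emat D) a b
      + mmul D (Bf D i) (Efm D) a b
      - mmul D (Bm D i) (Emf D) a b
      + Bm D i a b))"

text \<open>\<open>Q_{i,m} = 1/2 \<Sum>_j (diag(g_ij) \<hat>Q_{j,m} + \<hat>Q_{j,m} diag(g_ij))\<close>.\<close>
definition Qmet :: "disc \<Rightarrow> (nat \<Rightarrow> nat \<Rightarrow> (nat \<Rightarrow> real) \<Rightarrow> real) \<Rightarrow> nat \<Rightarrow> nmat" where
  "Qmet D g i = (\<lambda>a b. (1/2) * (\<Sum>j<dim D. (g i j (pt D a) + g i j (pt D b)) * Qhat D j a b))"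

text \<open>Scaled mortar normals \<open>n_{i,m}\<close>; \<open>B_{i,m} = diag(n_{i,m}) \<hat>M_m\<close> has diagonal nmet * wt.\<close>
definition nmet :: "disc \<Rightarrow> (nat \<Rightarrow> nat \<Rightarrow> (nat \<Rightarrow> real) \<Rightarrow> real) \<Rightarrow> nat \<Rightarrow> node \<Rightarrow> real" where
  "nmet D g i c = (\<Sum>j<dim D. g i j (pt D c) * nhat j c)"

definition vface :: "disc \<Rightarrow> ('a \<Rightarrow> 'b::real_vector) \<Rightarrow> (node \<Rightarrow> 'a) \<Rightarrow> node \<Rightarrow> 'b" where
  "vface D v uh c = (\<Sum>a\<in>vol_nodes D. Emat D c a *\<^sub>R v (uh a))"

definition vmort :: "disc \<Rightarrow> ('a \<Rightarrow> 'b::real_vector) \<Rightarrow> (node \<Rightarrow> 'a) \<Rightarrow> node \<Rightarrow> 'b" where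
  "vmort D v uh c = (\<Sum>b\<in>face_nodes D. Emf D c b *\<^sub>R vface D v uh b)"

definition utilde :: "disc \<Rightarrow> ('a \<Rightarrow> 'b::real_vector) \<Rightarrow> ('b \<Rightarrow> 'a) \<Rightarrow> (node \<Rightarrow> 'a) \<Rightarrow> node \<Rightarrow> 'a" where
  "utilde D v uofv uh c = (case c of
      VN _ \<Rightarrow> uh c
    | FN _ _ _ \<Rightarrow> uofv (vface D v uh c)
    | MN _ _ _ \<Rightarrow> uofv (vmort D v uh c))"

text \<open>The matrix [I, E^T, E^T E_mf^T] (rows: volume nodes, columns: all nodes).\<close>
definition Pmat :: "disc \<Rightarrow> nmat" where
  "Pmat D = (\<lambda>a c. if c \<in> vol_nodes D then (if a = c then 1 else 0)
                  else if c \<in> face_nodes D then Emat D c a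
                  else if c \<in> mortar_nodes D then mmul D (mtr (Emat D)) (mtr (Emf D)) a c
                  else 0)"

text \<open>Entry c of (2Q o F) 1.\<close>
definition had :: "disc \<Rightarrow> nmat \<Rightarrow> ('a \<Rightarrow> 'a \<Rightarrow> 'b::real_vector) \<Rightarrow> (node \<Rightarrow> 'a) \<Rightarrow> node \<Rightarrow> 'b" where
  "had D Q fS ut c = (\<Sum>e\<in>all_nodes D. (2 * Q c e) *\<^sub>R fS (ut c) (ut e))"

text \<open>Volume-node entry a of the i-th spatial term of the semi-discrete system.\<close>
definition sd_term ::
  "disc \<Rightarrow> (nat \<Rightarrow> nat \<Rightarrow> (nat \<Rightarrow> real) \<Rightarrow> real) \<Rightarrow> (nat \<Rightarrow> 'a \<Rightarrow> 'a \<Rightarrow> 'b::real_vector)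
   \<Rightarrow> (nat \<Rightarrow> 'a \<Rightarrow> 'b) \<Rightarrow> (nat \<Rightarrow> node \<Rightarrow> 'b) \<Rightarrow> ('a \<Rightarrow> 'c::real_vector) \<Rightarrow> ('c \<Rightarrow> 'a)
   \<Rightarrow> (node \<Rightarrow> 'a) \<Rightarrow> nat \<Rightarrow> node \<Rightarrow> 'b" where
  "sd_term D g fS f fstar v uofv uh i a =
     (\<Sum>c\<in>all_nodes D. Pmat D a c *\<^sub>R had D (Qmet D g i) (fS i) (utilde D v uofv uh) c)
   + (\<Sum>c\<in>mortar_nodes D. (mmul D (mtr (Emat D)) (mtr (Emf D)) a c * (nmet D g i c * wt D c))
        *\<^sub>R (fstar i c - f i (utilde D v uofv uh c)))"

end

theory Submission
  imports Defs
begin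

text \<open>Contract the semi-discrete system with the entropy variables \<open>v(u\<^sub>h)\<close>; by the chain rule the
  time derivative term becomes \<open>\<one>\<^sup>T M dS(u\<^sub>h)/dt\<close>. The transposed interpolation rows
  \<open>[I, E\<^sup>T, E\<^sup>T E\<^sub>m\<^sub>f\<^sup>T]\<close> map \<open>v(u\<^sub>h)\<close> to the entropy variables of the interpolated state, so the
  flux-differencing term becomes \<open>\<Sum>\<^sub>c\<^sub>e 2 (Q\<^sub>i\<^sub>,\<^sub>m)\<^sub>c\<^sub>e v(u\<^sub>c)\<^sup>T f\<^sub>S(u\<^sub>c, u\<^sub>e)\<close>. The operator \<open>Q\<^sub>i\<^sub>,\<^sub>m\<close> is
  summation by parts, \<open>Q + Q\<^sup>T = B\<^sub>i\<^sub>,\<^sub>m\<close>, which reduces to the 1D identity \<open>Q + Q\<^sup>T = B\<close> of an exact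
  quadrature rule and to \<open>E\<^sub>f\<^sub>m\<close> being the adjoint of \<open>E\<^sub>m\<^sub>f\<close>. It is also free-stream preserving,
  \<open>Q\<^sub>i\<^sub>,\<^sub>m \<one> = 0\<close>: under the degree conditions every block acts exactly on the polynomial metric
  terms, so \<open>Q\<^sub>i\<^sub>,\<^sub>m \<one>\<close> is the divergence of the metric terms. Given both properties, symmetry and
  Tadmor's condition for \<open>f\<^sub>S\<close> collapse the flux-differencing term to
  \<open>\<one>\<^sup>T B\<^sub>i\<^sub>,\<^sub>m (v\<^sub>m \<cdot> f\<^sub>i(u\<^sub>m) - \<psi>\<^sub>i(u\<^sub>m))\<close>, and the mortar correction replaces \<open>f\<^sub>i(u\<^sub>m)\<close> by \<open>f\<^sub>i\<^sup>*\<close>.\<close>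

section \<open>Lagrange interpolation on the 1D nodes\<close>

definition lag_poly :: "nat \<Rightarrow> (nat \<Rightarrow> real) \<Rightarrow> nat \<Rightarrow> real poly" where
  "lag_poly N x k = (\<Prod>m\<in>{..N}-{k}. smult (1/(x k - x m)) [:-x m, 1:])"

lemma poly_lag_poly: "poly (lag_poly N x k) t = lag N x k t"
  unfolding lag_poly_def lag_def poly_prod
  by (intro prod.cong) (auto simp: diff_divide_distrib)

lemma lag_eq_poly: "lag N x k = poly (lag_poly N x k)"
  by (auto simp: poly_lag_poly)

lemma deriv_lag: "deriv (lag N x k) t = poly (pderiv (lag_poly N x k)) t"
  unfolding lag_eq_poly by (rule DERIV_imp_deriv) (rule poly_DERIV)

lemma degree_lag_poly: assumes kN: "k \<le> N" shows "degree (lag_poly N x k) \<le> N"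
proof -
  have "degree (lag_poly N x k) \<le> sum (degree \<circ> (\<lambda>m. smult (1/(x k - x m)) [:-x m, 1:])) ({..N}-{k})"
    unfolding lag_poly_def by (rule degree_prod_sum_le) auto
  also have "\<dots> \<le> (\<Sum>m\<in>{..N}-{k}. 1)"
    by (intro sum_mono) (auto simp: degree_smult_le)
  also have "\<dots> \<le> N" using kN by (auto simp: card_Diff_singleton)
  finally show ?thesis .
qed

lemma lag_at_node:
  assumes inj: "inj_on x {..N}" and j: "j \<le> N" and k: "k \<le> N"
  shows "lag N x k (x j) = (if j = k then 1 else 0)"
proof (cases "j = k")
  case True
  have "\<And>m. m \<in> {..N}-{k} \<Longrightarrow> (x k - x m) / (x k - x m) = 1"
    using inj k by (auto simp: inj_on_def)
  then show ?thesis using True by (simp add: lag_def)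
next
  case False
  have "j \<in> {..N}-{k}" using j False by auto
  then have "(\<Prod>m\<in>{..N}-{k}. (x j - x m) / (x k - x m)) = 0"
    by (intro prod_zero) auto
  then show ?thesis unfolding lag_def using False by simp
qed

lemma lag_poly_interpolation:
  assumes inj: "inj_on x {..N}" and deg: "degree P \<le> N"
  shows "P = (\<Sum>m\<le>N. smult (poly P (x m)) (lag_poly N x m))"
proof (rule ccontr)
  define R where "R = P - (\<Sum>m\<le>N. smult (poly P (x m)) (lag_poly N x m))"
  assume "P \<noteq> (\<Sum>m\<le>N. smult (poly P (x m)) (lag_poly N x m))"
  then have R0: "R \<noteq> 0" by (simp add: R_def)
  have "degree (\<Sum>m\<le>N. smult (poly P (x m)) (lag_poly N x m)) \<le> N"
    by (intro degree_sum_le) (auto intro: order.trans[OF degree_smult_le] degree_lag_poly)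
  then have dR: "degree R \<le> N" unfolding R_def using deg
    by (meson degree_diff_le)
  have roots: "poly R (x j) = 0" if j: "j \<le> N" for j
  proof -
    have "(\<Sum>m\<le>N. poly P (x m) * lag N x m (x j)) = poly P (x j)"
      using j by (simp add: lag_at_node[OF inj] if_distrib cong: if_cong)
    then show ?thesis by (simp add: R_def poly_sum poly_lag_poly)
  qed
  have "x ` {..N} \<subseteq> {t. poly R t = 0}" using roots by auto
  then have "card (x ` {..N}) \<le> card {t. poly R t = 0}"
    by (intro card_mono poly_roots_finite R0)
  also have "\<dots> \<le> degree R" by (rule card_poly_roots_bound[OF R0])
  finally have "N + 1 \<le> N" using dR card_image[OF inj] by simp
  then show False by simp
qed

lemma lag_interpolation:
  assumes inj: "inj_on x {..N}" and deg: "degree P \<le> N"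
  shows "poly P t = (\<Sum>m\<le>N. poly P (x m) * lag N x m t)"
  by (subst lag_poly_interpolation[OF inj deg]) (simp add: poly_sum poly_lag_poly)

lemma pderiv_sum: "pderiv (sum f A) = (\<Sum>x\<in>A. pderiv (f x))"
  using higher_pderiv_sum[of 1 f A] by simp

lemma lag_interpolation_deriv:
  assumes inj: "inj_on x {..N}" and deg: "degree P \<le> N"
  shows "poly (pderiv P) t = (\<Sum>m\<le>N. poly P (x m) * deriv (lag N x m) t)"
  by (subst lag_poly_interpolation[OF inj deg])
     (simp add: poly_sum pderiv_sum pderiv_smult deriv_lag)

section \<open>Summation by parts for the 1D operator\<close>

lemma integral_poly_pderiv:
  fixes P :: "real poly"
  shows "integral {-1..1} (poly (pderiv P)) = poly P 1 - poly P (-1)"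
proof -
  have "(poly P has_vector_derivative poly (pderiv P) t) (at t within {-1..1})" for t
    by (rule has_vector_derivative_at_within)
       (simp add: poly_DERIV flip: has_real_derivative_iff_has_vector_derivative)
  then have "(poly (pderiv P) has_integral (poly P 1 - poly P (-1))) {-1..1}"
    by (intro fundamental_theorem_of_calculus) auto
  then show ?thesis by (rule integral_unique)
qed

text \<open>Both the Gauss and the Lobatto rule integrate degree \<open>2N-1\<close> exactly, which is all that
  summation by parts needs.\<close>
locale exact_quadrature =
  fixes N :: nat and x w :: "nat \<Rightarrow> real"
  assumes nodes_inj: "inj_on x {..N}" and weights_pos: "\<forall>k\<le>N. 0 < w k"
    and exactness: "\<forall>p::real poly. degree p \<le> 2*N-1 \<longrightarrow>
        (\<Sum>k\<le>N. w k * poly p (x k)) = integral {-1..1} (poly p)"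
begin

text \<open>The rule integrates \<open>(\<ell>\<^sub>j \<ell>\<^sub>k)'\<close> exactly.\<close>
lemma Q1D_sbp:
  assumes j: "j \<le> N" and k: "k \<le> N"
  shows "Q1D N x w j k + Q1D N x w k j = lag N x j 1 * lag N x k 1 - lag N x j (-1) * lag N x k (-1)"
proof -
  define P where "P = lag_poly N x j * lag_poly N x k"
  have "degree P \<le> N + N" unfolding P_def
    by (rule order.trans[OF degree_mult_le]) (intro add_mono degree_lag_poly j k)
  then have dP: "degree (pderiv P) \<le> 2*N-1" by (simp add: degree_pderiv)
  have "(\<Sum>m\<le>N. w m * poly (pderiv P) (x m)) = poly P 1 - poly P (-1)"
    using exactness dP integral_poly_pderiv by simp
  moreover have "(\<Sum>m\<le>N. w m * poly (pderiv P) (x m)) =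
      (\<Sum>m\<le>N. (if m = k then w k * deriv (lag N x j) (x k) else 0) +
               (if m = j then w j * deriv (lag N x k) (x j) else 0))"
  proof (intro sum.cong refl)
    fix m assume m: "m \<in> {..N}"
    show "w m * poly (pderiv P) (x m) =
      (if m = k then w k * deriv (lag N x j) (x k) else 0) +
               (if m = j then w j * deriv (lag N x k) (x j) else 0)"
      using m j k by (cases "m = j"; cases "m = k")
        (simp_all add: P_def pderiv_mult poly_lag_poly deriv_lag lag_at_node[OF nodes_inj] algebra_simps)
  qed
  ultimately show ?thesis using j k
    by (simp add: Q1D_def sum.distrib P_def poly_lag_poly algebra_simps)
qed

lemma Q1D_apply_poly:
  assumes j: "j \<le> N" and deg: "degree P \<le> N"
  shows "(\<Sum>m\<le>N. Q1D N x w j m * poly P (x m)) = w j * poly (pderiv P) (x j)"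
  unfolding lag_interpolation_deriv[OF nodes_inj deg] Q1D_def by (simp add: sum_distrib_left mult_ac)

lemma Q1D_skew_apply_poly:
  assumes j: "j \<le> N" and deg: "degree P \<le> N"
  shows "(\<Sum>m\<le>N. Q1D N x w j m * poly P (x m)) - (\<Sum>m\<le>N. Q1D N x w m j * poly P (x m))
       + (lag N x j 1 * poly P 1 - lag N x j (-1) * poly P (-1))
       = 2 * w j * poly (pderiv P) (x j)"
proof -
  have "(\<Sum>m\<le>N. Q1D N x w m j * poly P (x m))
      = (\<Sum>m\<le>N. (lag N x m 1 * lag N x j 1 - lag N x m (-1) * lag N x j (-1)
                  - w j * deriv (lag N x m) (x j)) * poly P (x m))"
    using Q1D_sbp[OF _ j] unfolding Q1D_def by (intro sum.cong refl) (simp add: eq_diff_eq)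
  also have "\<dots> = lag N x j 1 * (\<Sum>m\<le>N. poly P (x m) * lag N x m 1)
      - lag N x j (-1) * (\<Sum>m\<le>N. poly P (x m) * lag N x m (-1))
      - w j * (\<Sum>m\<le>N. poly P (x m) * deriv (lag N x m) (x j))"
    by (simp add: sum_subtractf left_diff_distrib right_diff_distrib sum_distrib_left mult_ac)
  also have "\<dots> = lag N x j 1 * poly P 1 - lag N x j (-1) * poly P (-1) - w j * poly (pderiv P) (x j)"
    by (simp only: lag_interpolation[OF nodes_inj deg, symmetric]
        lag_interpolation_deriv[OF nodes_inj deg, symmetric])
  finally show ?thesis using Q1D_apply_poly[OF j deg] by simp
qed

end

lemma exact_quadrature_if_gauss_or_lobatto:
  assumes "gauss_rule N x w \<or> lobatto_rule N x w"
  shows "exact_quadrature N x w"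
  using assms unfolding gauss_rule_def lobatto_rule_def exact_quadrature_def
  by (auto dest: strict_mono_on_imp_inj_on)

section \<open>Tensor-product polynomials\<close>

lemma midxD: "a \<in> midx d Dg \<Longrightarrow> (l < d \<longrightarrow> a l \<le> Dg l) \<and> (d \<le> l \<longrightarrow> a l = 0)"
  unfolding midx_def mem_Collect_eq by (erule allE[of _ l])

lemma midxI: "(\<And>l. (l < d \<longrightarrow> a l \<le> Dg l) \<and> (d \<le> l \<longrightarrow> a l = 0)) \<Longrightarrow> a \<in> midx d Dg"
  unfolding midx_def mem_Collect_eq by (rule allI)

definition monomial :: "nat \<Rightarrow> (nat \<Rightarrow> nat) \<Rightarrow> (nat \<Rightarrow> real) \<Rightarrow> real" where
  "monomial d \<alpha> y = (\<Prod>l<d. y l ^ \<alpha> l)"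

lemma if_0_mult: "(if P then a else 0) * (b::real) = (if P then a * b else 0)"
  by simp

lemma tpoly_iff_monomials: "tpoly d Dg p \<longleftrightarrow> (\<exists>c. \<forall>y. p y = (\<Sum>\<alpha>\<in>midx d Dg. c \<alpha> * monomial d \<alpha> y))"
  by (simp add: tpoly_def monomial_def)

lemma finite_midx: "finite (midx d Dg)"
proof -
  let ?M = "\<Sum>l<d. Dg l"
  have "midx d Dg \<subseteq> {f. \<forall>x. (x \<in> {..<d} \<longrightarrow> f x \<in> {..?M}) \<and> (x \<notin> {..<d} \<longrightarrow> f x = 0)}"
  proof clarify
    fix f x assume f: "f \<in> midx d Dg"
    show "(x \<in> {..<d} \<longrightarrow> f x \<in> {..?M}) \<and> (x \<notin> {..<d} \<longrightarrow> f x = 0)"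
    proof (intro conjI impI)
      assume x: "x \<in> {..<d}"
      have "f x \<le> Dg x" using f x by (auto simp: midx_def)
      also have "Dg x \<le> ?M" using x by (intro member_le_sum) auto
      finally show "f x \<in> {..?M}" by simp
    qed (use f in \<open>auto simp: midx_def\<close>)
  qed
  then show ?thesis by (rule finite_subset) (intro finite_set_of_finite_funs; simp)
qed

lemma zero_midx: "(\<lambda>_. 0) \<in> midx d Dg" by (simp add: midx_def)

lemma tpoly_mono:
  assumes "tpoly d D1 p" "\<forall>l<d. D1 l \<le> D2 l"
  shows "tpoly d D2 p"
proof -
  obtain c where c: "\<forall>y. p y = (\<Sum>\<alpha>\<in>midx d D1. c \<alpha> * monomial d \<alpha> y)"
    using assms(1) by (auto simp: tpoly_iff_monomials)
  have sub: "midx d D1 \<subseteq> midx d D2" using assms(2) by (auto simp: midx_def intro: order.trans)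
  define c2 where "c2 \<alpha> = (if \<alpha> \<in> midx d D1 then c \<alpha> else 0)" for \<alpha>
  have "p y = (\<Sum>\<alpha>\<in>midx d D2. c2 \<alpha> * monomial d \<alpha> y)" for y
  proof -
    have "(\<Sum>\<alpha>\<in>midx d D2. c2 \<alpha> * monomial d \<alpha> y) = (\<Sum>\<alpha>\<in>midx d D2. if \<alpha> \<in> midx d D1 then c \<alpha> * monomial d \<alpha> y else 0)"
      by (simp add: c2_def if_0_mult)
    also have "\<dots> = (\<Sum>\<alpha>\<in>midx d D2 \<inter> midx d D1. c \<alpha> * monomial d \<alpha> y)"
      by (rule sum.inter_restrict[OF finite_midx, symmetric])
    also have "\<dots> = p y" using sub c by (simp add: Int_absorb1)
    finally show ?thesis by simp
  qed
  then show ?thesis unfolding tpoly_iff_monomials by blast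
qed

lemma tpoly_const: "tpoly d D (\<lambda>_. a)"
proof -
  define c2 where "c2 \<alpha> = (if \<alpha> = (\<lambda>_. 0) then a else 0)" for \<alpha> :: "nat \<Rightarrow> nat"
  have "a = (\<Sum>\<alpha>\<in>midx d D. c2 \<alpha> * monomial d \<alpha> y)" for y
    by (simp add: c2_def if_0_mult zero_midx finite_midx monomial_def)
  then show ?thesis unfolding tpoly_iff_monomials by blast
qed

lemma tpoly_add:
  assumes "tpoly d D p" "tpoly d D q"
  shows "tpoly d D (\<lambda>y. p y + q y)"
proof -
  obtain c where c: "\<forall>y. p y = (\<Sum>\<alpha>\<in>midx d D. c \<alpha> * monomial d \<alpha> y)"
    using assms(1) by (auto simp: tpoly_iff_monomials)
  obtain c' where c': "\<forall>y. q y = (\<Sum>\<alpha>\<in>midx d D. c' \<alpha> * monomial d \<alpha> y)"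
    using assms(2) by (auto simp: tpoly_iff_monomials)
  define c2 where "c2 \<alpha> = c \<alpha> + c' \<alpha>" for \<alpha>
  have "p y + q y = (\<Sum>\<alpha>\<in>midx d D. c2 \<alpha> * monomial d \<alpha> y)" for y
    using c c' by (simp add: c2_def sum.distrib distrib_right)
  then show ?thesis unfolding tpoly_iff_monomials by blast
qed

lemma tpoly_scale:
  assumes "tpoly d D p"
  shows "tpoly d D (\<lambda>y. a * p y)"
proof -
  obtain c where c: "\<forall>y. p y = (\<Sum>\<alpha>\<in>midx d D. c \<alpha> * monomial d \<alpha> y)"
    using assms(1) by (auto simp: tpoly_iff_monomials)
  define c2 where "c2 \<alpha> = a * c \<alpha>" for \<alpha>
  have "a * p y = (\<Sum>\<alpha>\<in>midx d D. c2 \<alpha> * monomial d \<alpha> y)" for y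
    using c by (simp add: c2_def sum_distrib_left mult.assoc)
  then show ?thesis unfolding tpoly_iff_monomials by blast
qed

lemma tpoly_sum:
  assumes "finite A" "\<And>i. i \<in> A \<Longrightarrow> tpoly d D (p i)"
  shows "tpoly d D (\<lambda>y. \<Sum>i\<in>A. p i y)"
  using assms by (induction A rule: finite_induct) (auto intro: tpoly_add tpoly_const)

lemma monomial_add: "monomial d (\<lambda>l. \<alpha> l + \<beta> l) y = monomial d \<alpha> y * monomial d \<beta> y"
  by (simp add: monomial_def power_add prod.distrib)

lemma tpoly_mult:
  assumes "tpoly d D1 p" "tpoly d D2 q"
  shows "tpoly d (\<lambda>l. D1 l + D2 l) (\<lambda>y. p y * q y)"
proof -
  obtain c where c: "\<forall>y. p y = (\<Sum>\<alpha>\<in>midx d D1. c \<alpha> * monomial d \<alpha> y)"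
    using assms(1) by (auto simp: tpoly_iff_monomials)
  obtain c' where c': "\<forall>y. q y = (\<Sum>\<alpha>\<in>midx d D2. c' \<alpha> * monomial d \<alpha> y)"
    using assms(2) by (auto simp: tpoly_iff_monomials)
  let ?S = "midx d D1 \<times> midx d D2"
  let ?T = "midx d (\<lambda>l. D1 l + D2 l)"
  let ?g = "\<lambda>(\<alpha>,\<beta>). (\<lambda>l. \<alpha> l + \<beta> l)"
  define C where "C \<gamma> = (\<Sum>ab\<in>{ab. ab \<in> ?S \<and> ?g ab = \<gamma>}. c (fst ab) * c' (snd ab))" for \<gamma>
  have fS: "finite ?S" by (simp add: finite_midx)
  have gST: "?g ` ?S \<subseteq> ?T" by (auto simp: midx_def add_mono)
  have "p y * q y = (\<Sum>\<gamma>\<in>?T. C \<gamma> * monomial d \<gamma> y)" for y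
  proof -
    have "p y * q y = (\<Sum>a\<in>midx d D1. \<Sum>b\<in>midx d D2. c a * monomial d a y * (c' b * monomial d b y))"
      using c c' by (simp only: sum_product)
    also have "\<dots> = (\<Sum>(a,b)\<in>?S. c a * monomial d a y * (c' b * monomial d b y))"
      by (rule sum.cartesian_product)
    also have "\<dots> = (\<Sum>ab\<in>?S. c (fst ab) * c' (snd ab) * monomial d (?g ab) y)"
      by (intro sum.cong refl) (auto simp: monomial_add)
    also have "\<dots> = (\<Sum>\<gamma>\<in>?T. \<Sum>ab\<in>{ab. ab \<in> ?S \<and> ?g ab = \<gamma>}. c (fst ab) * c' (snd ab) * monomial d (?g ab) y)"
      by (rule sum.group[OF fS finite_midx gST, symmetric])
    also have "\<dots> = (\<Sum>\<gamma>\<in>?T. C \<gamma> * monomial d \<gamma> y)"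
      unfolding C_def sum_distrib_right by (intro sum.cong refl) auto
    finally show ?thesis .
  qed
  then show ?thesis unfolding tpoly_iff_monomials by blast
qed

lemma tpoly_prod:
  assumes "finite A" "\<And>i. i \<in> A \<Longrightarrow> tpoly d (D i) (p i)"
  shows "tpoly d (\<lambda>l. \<Sum>i\<in>A. D i l) (\<lambda>y. \<Prod>i\<in>A. p i y)"
  using assms
proof (induction A rule: finite_induct)
  case empty then show ?case by (simp add: tpoly_const)
next
  case (insert a A)
  then show ?case using tpoly_mult[of d "D a" "p a" "\<lambda>l. \<Sum>i\<in>A. D i l" "\<lambda>y. \<Prod>i\<in>A. p i y"] by simp
qed

lemma tpoly_var:
  assumes k: "k < d"
  shows "tpoly d (\<lambda>l. if l = k then 1 else 0) (\<lambda>y. y k)"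
proof -
  let ?e = "\<lambda>l::nat. if l = k then 1 else (0::nat)"
  have e: "?e \<in> midx d (\<lambda>l. if l = k then 1 else 0)" using k by (auto simp: midx_def)
  have m: "monomial d ?e y = y k" for y using k
    by (simp add: monomial_def power_0 if_distrib[of "\<lambda>n. y _ ^ n"] prod.If_cases lessThan_def)
  define c2 :: "(nat \<Rightarrow> nat) \<Rightarrow> real" where "c2 \<alpha> = (if \<alpha> = ?e then 1 else 0)" for \<alpha>
  have "y k = (\<Sum>\<alpha>\<in>midx d (\<lambda>l. if l = k then 1 else 0). c2 \<alpha> * monomial d \<alpha> y)" for y
    using e m by (simp add: c2_def if_0_mult finite_midx)
  then show ?thesis unfolding tpoly_iff_monomials by blast
qed

lemma tpoly_pow_var:
  assumes k: "k < d"
  shows "tpoly d (\<lambda>l. if l = k then i else 0) (\<lambda>y. y k ^ i)"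
proof (induction i)
  case 0
  then show ?case using tpoly_const[of d "\<lambda>l. if l = k then 0 else 0" 1] by simp
next
  case (Suc i)
  have "tpoly d (\<lambda>l. (if l = k then 1 else 0) + (if l = k then i else 0)) (\<lambda>y. y k * y k ^ i)"
    by (rule tpoly_mult[OF tpoly_var[OF k] Suc])
  then have "tpoly d (\<lambda>l. (if l = k then 1 else 0) + (if l = k then i else 0)) (\<lambda>y. y k ^ Suc i)"
    by simp
  then show ?case by (rule tpoly_mono) auto
qed

lemma tpoly_poly_var:
  assumes k: "k < d" and deg: "degree P \<le> D k"
  shows "tpoly d D (\<lambda>y. poly P (y k))"
proof -
  have "tpoly d D (\<lambda>y. \<Sum>i\<le>degree P. coeff P i * y k ^ i)"
  proof (intro tpoly_sum tpoly_scale)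
    fix i assume "i \<in> {..degree P}"
    then have "i \<le> D k" using deg by auto
    then show "tpoly d D (\<lambda>y. y k ^ i)"
      by (intro tpoly_mono[OF tpoly_pow_var[OF k]]) auto
  qed simp
  then show ?thesis by (simp add: poly_altdef)
qed

lemma monomial_split:
  assumes "k < d"
  shows "monomial d \<alpha> y = y k ^ \<alpha> k * (\<Prod>l\<in>{..<d}-{k}. y l ^ \<alpha> l)"
  unfolding monomial_def using assms by (subst prod.remove[of _ k]) auto

lemma tpoly_restrict_line:
  assumes "tpoly d D h" "j < d"
  shows "\<exists>P. degree P \<le> D j \<and> (\<forall>\<tau>. h (y(j:=\<tau>)) = poly P \<tau>)"
proof -
  obtain c where c: "\<forall>y. h y = (\<Sum>\<alpha>\<in>midx d D. c \<alpha> * monomial d \<alpha> y)"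
    using assms(1) by (auto simp: tpoly_iff_monomials)
  define P where "P = (\<Sum>\<alpha>\<in>midx d D. smult (c \<alpha> * (\<Prod>l\<in>{..<d}-{j}. y l ^ \<alpha> l)) (monom 1 (\<alpha> j)))"
  have "degree P \<le> D j" unfolding P_def
  proof (intro degree_sum_le)
    fix \<alpha> assume "\<alpha> \<in> midx d D"
    then have "\<alpha> j \<le> D j" using assms(2) by (auto simp: midx_def)
    then show "degree (smult (c \<alpha> * (\<Prod>l\<in>{..<d}-{j}. y l ^ \<alpha> l)) (monom 1 (\<alpha> j))) \<le> D j"
      by (meson degree_monom_le degree_smult_le order_trans)
  qed (simp add: finite_midx)
  moreover have "h (y(j:=\<tau>)) = poly P \<tau>" for \<tau>
  proof -
    have "(\<Prod>l\<in>{..<d}-{j}. (y(j:=\<tau>)) l ^ \<alpha> l) = (\<Prod>l\<in>{..<d}-{j}. y l ^ \<alpha> l)" for \<alpha>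
      by (intro prod.cong) auto
    then show ?thesis using c monomial_split[OF assms(2)]
      by (simp add: P_def poly_sum poly_monom mult_ac)
  qed
  ultimately show ?thesis by blast
qed

section \<open>Face multi-indices and tensor-product interpolation\<close>

lemma fidxD: "b \<in> fidx d N k \<Longrightarrow> (l < d \<and> l \<noteq> k \<longrightarrow> b l \<le> N) \<and> ((d \<le> l \<or> l = k) \<longrightarrow> b l = 0)"
  unfolding fidx_def mem_Collect_eq by (erule allE[of _ l])

lemma fidxI: "(\<And>l. (l < d \<and> l \<noteq> k \<longrightarrow> b l \<le> N) \<and> ((d \<le> l \<or> l = k) \<longrightarrow> b l = 0)) \<Longrightarrow> b \<in> fidx d N k"
  unfolding fidx_def mem_Collect_eq by (rule allI)

lemma sum_fidx_prod:
  fixes f :: "nat \<Rightarrow> nat \<Rightarrow> real"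
  assumes k: "k < d"
  shows "(\<Sum>b\<in>fidx d N k. \<Prod>l\<in>{..<d}-{k}. f l (b l)) = (\<Prod>l\<in>{..<d}-{k}. \<Sum>m\<le>N. f l m)"
proof -
  let ?L = "{..<d}-{k}"
  have "(\<Prod>l\<in>?L. \<Sum>m\<le>N. f l m) = (\<Sum>g\<in>PiE ?L (\<lambda>_. {..N}). \<Prod>l\<in>?L. f l (g l))"
    by (rule prod_sum_PiE) auto
  also have "\<dots> = (\<Sum>b\<in>fidx d N k. \<Prod>l\<in>?L. f l (b l))"
  proof (rule sum.reindex_bij_witness[where i="\<lambda>b. restrict b ?L" and j="\<lambda>g l. if l \<in> ?L then g l else 0"])
    fix g assume g: "g \<in> PiE ?L (\<lambda>_. {..N})"
    show "restrict (\<lambda>l. if l \<in> ?L then g l else 0) ?L = g"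
    proof (rule ext)
      fix l show "restrict (\<lambda>l. if l \<in> ?L then g l else 0) ?L l = g l"
        using g by (cases "l \<in> ?L") (auto simp: PiE_def extensional_def)
    qed
    show "(\<lambda>l. if l \<in> ?L then g l else 0) \<in> fidx d N k"
    proof (rule fidxI)
      fix l show "(l < d \<and> l \<noteq> k \<longrightarrow> (if l \<in> ?L then g l else 0) \<le> N) \<and> ((d \<le> l \<or> l = k) \<longrightarrow> (if l \<in> ?L then g l else 0) = 0)"
        using g by (auto simp: PiE_iff)
    qed
    show "(\<Prod>l\<in>?L. f l ((\<lambda>l. if l \<in> ?L then g l else 0) l)) = (\<Prod>l\<in>?L. f l (g l))"
      by (intro prod.cong) auto
  next
    fix b assume b: "b \<in> fidx d N k"
    show "(\<lambda>l. if l \<in> ?L then restrict b ?L l else 0) = b"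
    proof (rule ext)
      fix l
      note bl = fidxD[OF b, of l]
      show "(if l \<in> ?L then restrict b ?L l else 0) = b l"
        using bl by (cases "l \<in> ?L") auto
    qed
    show "restrict b ?L \<in> PiE ?L (\<lambda>_. {..N})"
      using fidxD[OF b] by (auto simp: PiE_iff)
  qed
  finally show ?thesis by (rule sym)
qed

lemma finite_fidx: "finite (fidx d N k)"
proof -
  have "fidx d N k \<subseteq> {f. \<forall>x. (x \<in> {..<d} \<longrightarrow> f x \<in> {..N}) \<and> (x \<notin> {..<d} \<longrightarrow> f x = 0)}"
  proof (rule subsetI, rule CollectI, rule allI)
    fix f x assume "f \<in> fidx d N k"
    from fidxD[OF this, of x]
    show "(x \<in> {..<d} \<longrightarrow> f x \<in> {..N}) \<and> (x \<notin> {..<d} \<longrightarrow> f x = 0)"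
      by (cases "x = k") auto
  qed
  moreover have "finite {f. \<forall>x. (x \<in> {..<d} \<longrightarrow> f x \<in> {..N}) \<and> (x \<notin> {..<d} \<longrightarrow> (f x::nat) = 0)}"
    by (rule finite_set_of_finite_funs) auto
  ultimately show ?thesis by (rule finite_subset)
qed

lemma tensor_lag_interpolation_monomial:
  assumes k: "k < d" and \<alpha>: "\<forall>l<d. l \<noteq> k \<longrightarrow> \<alpha> l \<le> N"
    and inj: "inj_on x {..N}" and zk: "z k = \<sigma>"
  shows "(\<Sum>b\<in>fidx d N k. (\<Prod>l\<in>{..<d}-{k}. lag N x (b l) (z l)) * monomial d \<alpha> (\<lambda>l. if l = k then \<sigma> else x (b l)))
        = monomial d \<alpha> z"
proof -
  let ?L = "{..<d}-{k}"
  have "(\<Sum>b\<in>fidx d N k. (\<Prod>l\<in>?L. lag N x (b l) (z l)) * monomial d \<alpha> (\<lambda>l. if l = k then \<sigma> else x (b l)))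
      = (\<Sum>b\<in>fidx d N k. \<sigma> ^ \<alpha> k * (\<Prod>l\<in>?L. lag N x (b l) (z l) * x (b l) ^ \<alpha> l))"
  proof (intro sum.cong refl)
    fix b
    have "(\<Prod>l\<in>?L. (\<lambda>l. if l = k then \<sigma> else x (b l)) l ^ \<alpha> l) = (\<Prod>l\<in>?L. x (b l) ^ \<alpha> l)"
      by (intro prod.cong) auto
    then show "(\<Prod>l\<in>?L. lag N x (b l) (z l)) * monomial d \<alpha> (\<lambda>l. if l = k then \<sigma> else x (b l))
        = \<sigma> ^ \<alpha> k * (\<Prod>l\<in>?L. lag N x (b l) (z l) * x (b l) ^ \<alpha> l)"
      by (simp add: monomial_split[OF k] prod.distrib)
  qed
  also have "\<dots> = \<sigma> ^ \<alpha> k * (\<Prod>l\<in>?L. \<Sum>m\<le>N. lag N x m (z l) * x m ^ \<alpha> l)"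
    by (simp add: sum_distrib_left[symmetric] sum_fidx_prod[OF k, where f="\<lambda>l m. lag N x m (z l) * x m ^ \<alpha> l"])
  also have "\<dots> = \<sigma> ^ \<alpha> k * (\<Prod>l\<in>?L. z l ^ \<alpha> l)"
  proof -
    have "(\<Sum>m\<le>N. lag N x m (z l) * x m ^ \<alpha> l) = z l ^ \<alpha> l" if l: "l \<in> ?L" for l
    proof -
      have "degree (monom (1::real) (\<alpha> l)) \<le> N" using \<alpha> l by (simp add: degree_monom_eq)
      from lag_interpolation[OF inj this, of "z l"] show ?thesis by (simp add: poly_monom mult.commute)
    qed
    then show ?thesis by simp
  qed
  also have "\<dots> = monomial d \<alpha> z" by (simp add: monomial_split[OF k] zk)
  finally show ?thesis .
qed

lemma tensor_lag_interpolation: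
  assumes k: "k < d" and h: "tpoly d D h" and DN: "\<forall>l<d. l \<noteq> k \<longrightarrow> D l \<le> N"
    and inj: "inj_on x {..N}" and zk: "z k = \<sigma>"
  shows "(\<Sum>b\<in>fidx d N k. (\<Prod>l\<in>{..<d}-{k}. lag N x (b l) (z l)) * h (\<lambda>l. if l = k then \<sigma> else x (b l))) = h z"
proof -
  obtain c where c: "\<forall>y. h y = (\<Sum>\<alpha>\<in>midx d D. c \<alpha> * monomial d \<alpha> y)"
    using h by (auto simp: tpoly_iff_monomials)
  have mono: "\<forall>l<d. l \<noteq> k \<longrightarrow> \<alpha> l \<le> N" if "\<alpha> \<in> midx d D" for \<alpha>
    using that DN by (auto simp: midx_def intro: order.trans)
  let ?L = "\<lambda>b. \<Prod>l\<in>{..<d}-{k}. lag N x (b l) (z l)" and ?y = "\<lambda>b l. if l = k then \<sigma> else x (b l)"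
  have "(\<Sum>b\<in>fidx d N k. ?L b * h (?y b))
      = (\<Sum>\<alpha>\<in>midx d D. c \<alpha> * (\<Sum>b\<in>fidx d N k. ?L b * monomial d \<alpha> (?y b)))"
    unfolding c[rule_format] sum_distrib_left by (subst sum.swap) (simp add: mult_ac)
  also have "\<dots> = h z"
    using tensor_lag_interpolation_monomial[where z=z and \<sigma>=\<sigma>, OF k _ inj zk] mono c by simp
  finally show ?thesis .
qed

section \<open>Nodes and the block structure of the mortar operator\<close>

lemma VN_in_vol_nodes[simp]: "VN a \<in> vol_nodes D \<longleftrightarrow> a \<in> midx (dim D) (\<lambda>_. deg D)"
  by (auto simp: vol_nodes_def)
lemma FN_notin_vol_nodes[simp]: "FN k s b \<notin> vol_nodes D" by (auto simp: vol_nodes_def)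
lemma MN_notin_vol_nodes[simp]: "MN k s j \<notin> vol_nodes D" by (auto simp: vol_nodes_def)
lemma FN_in_face_nodes[simp]: "FN k s b \<in> face_nodes D \<longleftrightarrow> k < dim D \<and> b \<in> fidx (dim D) (deg D) k"
  by (auto simp: face_nodes_def face_nodes_of_def)
lemma VN_notin_face_nodes[simp]: "VN a \<notin> face_nodes D" by (auto simp: face_nodes_def face_nodes_of_def)
lemma MN_notin_face_nodes[simp]: "MN k s j \<notin> face_nodes D" by (auto simp: face_nodes_def face_nodes_of_def)
lemma MN_in_mortar_nodes[simp]: "MN k s j \<in> mortar_nodes D \<longleftrightarrow> k < dim D \<and> j < nmor D k s"
  by (auto simp: mortar_nodes_def mortar_nodes_of_def)
lemma VN_notin_mortar_nodes[simp]: "VN a \<notin> mortar_nodes D" by (auto simp: mortar_nodes_def mortar_nodes_of_def)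
lemma FN_notin_mortar_nodes[simp]: "FN k s b \<notin> mortar_nodes D" by (auto simp: mortar_nodes_def mortar_nodes_of_def)

lemma finite_vol_nodes[simp]: "finite (vol_nodes D)"
  by (simp add: vol_nodes_def finite_midx)
lemma finite_face_nodes[simp]: "finite (face_nodes D)"
  unfolding face_nodes_def face_nodes_of_def
proof (intro finite_UN_I)
  fix k s show "finite (FN k s ` fidx (dim D) (deg D) k)" by (simp add: finite_fidx)
qed (auto simp: UNIV_bool)
lemma finite_mortar_nodes[simp]: "finite (mortar_nodes D)"
  unfolding mortar_nodes_def mortar_nodes_of_def
  by (intro finite_UN_I) (auto simp: UNIV_bool)
lemma finite_all_nodes[simp]: "finite (all_nodes D)"
  by (simp add: all_nodes_def)

lemma face_node_in_all_nodes: "c \<in> face_nodes D \<Longrightarrow> c \<in> all_nodes D" by (simp add: all_nodes_def)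
lemma mortar_node_in_all_nodes: "c \<in> mortar_nodes D \<Longrightarrow> c \<in> all_nodes D" by (simp add: all_nodes_def)

lemma mmul_diag_left:
  assumes "\<And>b. b \<noteq> c \<Longrightarrow> X c b = 0" "c \<notin> all_nodes D \<Longrightarrow> X c c = 0"
  shows "mmul D X M c e = X c c * M c e"
proof (cases "c \<in> all_nodes D")
  case True
  then show ?thesis unfolding mmul_def
    by (subst sum.remove[OF finite_all_nodes True]) (auto simp: assms(1) intro!: sum.neutral)
next
  case False
  have "\<forall>b\<in>all_nodes D. X c b * M b e = 0"
    using False assms(1) by (metis mult_zero_left)
  then show ?thesis unfolding mmul_def using assms(2)[OF False] by (simp only: sum.neutral)
qed

lemma mmul_diag_right:
  assumes "\<And>b. b \<noteq> e \<Longrightarrow> X b e = 0" "e \<notin> all_nodes D \<Longrightarrow> X e e = 0"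
  shows "mmul D M X c e = M c e * X e e"
proof (cases "e \<in> all_nodes D")
  case True
  then show ?thesis unfolding mmul_def
    by (subst sum.remove[OF finite_all_nodes True]) (auto simp: assms(1) intro!: sum.neutral)
next
  case False
  have "\<forall>b\<in>all_nodes D. M c b * X b e = 0"
    using False assms(1) by (metis mult_zero_right)
  then show ?thesis unfolding mmul_def using assms(2)[OF False] by (simp only: sum.neutral)
qed

lemma mmul_Bf_left: "mmul D (Bf D i) M c e = Bf D i c c * M c e"
  by (rule mmul_diag_left) (auto simp: Bf_def face_node_in_all_nodes)
lemma mmul_Bm_left: "mmul D (Bm D i) M c e = Bm D i c c * M c e"
  by (rule mmul_diag_left) (auto simp: Bm_def mortar_node_in_all_nodes)
lemma mmul_Bf_right: "mmul D M (Bf D i) c e = M c e * Bf D i e e"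
  by (rule mmul_diag_right) (auto simp: Bf_def face_node_in_all_nodes)

lemma Qhat_blocks:
  "Qhat D j c e = 1/2 * (Qvol D j c e - Qvol D j e c + Emat D e c * Bf D j e e
      - Bf D j c c * Emat D c e + Bf D j c c * Efm D c e - Bm D j c c * Emf D c e + Bm D j c e)"
  by (simp add: Qhat_def mmul_Bf_left mmul_Bm_left mmul_Bf_right mtr_def)

section \<open>The reference blocks applied to nodal polynomials\<close>

lemma midx_update:
  assumes a: "a \<in> midx d (\<lambda>_. N)" and j: "j < d" and m: "m \<le> N"
  shows "a(j:=m) \<in> midx d (\<lambda>_. N)"
  using midxD[OF a] j m by (intro midxI) auto

lemma sum_all_nodes_line:
  assumes a: "a \<in> midx (dim D) (\<lambda>_. deg D)" and j: "j < dim D"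
    and z: "\<And>b. b \<in> midx (dim D) (\<lambda>_. deg D) \<Longrightarrow> (\<exists>l<dim D. l \<noteq> j \<and> a l \<noteq> b l) \<Longrightarrow> F (VN b) = 0"
    and z2: "\<And>e. e \<in> all_nodes D \<Longrightarrow> e \<notin> vol_nodes D \<Longrightarrow> F e = 0"
  shows "(\<Sum>e\<in>all_nodes D. F e) = (\<Sum>m\<le>deg D. F (VN (a(j:=m))))"
proof -
  let ?S = "(\<lambda>m. VN (a(j:=m))) ` {..deg D}"
  have sub: "?S \<subseteq> all_nodes D" using midx_update[OF a j] by (auto simp: all_nodes_def)
  have "\<forall>e\<in>all_nodes D - ?S. F e = 0"
  proof
    fix e assume e: "e \<in> all_nodes D - ?S"
    show "F e = 0"
    proof (cases "e \<in> vol_nodes D")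
      case True
      then obtain b where eb: "e = VN b" and b: "b \<in> midx (dim D) (\<lambda>_. deg D)"
        by (auto simp: vol_nodes_def)
      have "b \<noteq> a(j := b j)" using e eb midxD[OF b, of j] j by auto
      then have "\<exists>l. b l \<noteq> (a(j := b j)) l" by (metis ext)
      then obtain l where l: "b l \<noteq> (a(j := b j)) l" by blast
      then have lj: "l \<noteq> j" by auto
      moreover have "l < dim D" using l lj midxD[OF b, of l] midxD[OF a, of l] by (cases "l < dim D") auto
      moreover have "a l \<noteq> b l" using l lj by auto
      ultimately show ?thesis using eb z[OF b] by blast
    next
      case False then show ?thesis using z2 e by auto
    qed
  qed
  then have "(\<Sum>e\<in>all_nodes D. F e) = (\<Sum>e\<in>?S. F e)"
    by (intro sum.mono_neutral_right finite_all_nodes sub)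
  also have "\<dots> = (\<Sum>m\<le>deg D. F (VN (a(j:=m))))"
    by (rule sum.reindex_cong[where l="\<lambda>m. VN (a(j:=m))"]) (auto simp: inj_on_def dest: fun_upd_eqD)
  finally show ?thesis .
qed

lemma pt_VN_upd: "pt D (VN (a(j:=m))) = (pt D (VN a))(j := xs D m)"
  by (auto simp: fun_eq_iff)

lemma prod_if_eq_fun_upd:
  "(\<Prod>l\<in>{..<d}-{j}. if a l = (a(j:=m)) l then f l else 0) = (\<Prod>l\<in>{..<d}-{j}. f l)"
  by (intro prod.cong) auto

lemma prod_if_eq_zero:
  fixes f :: "nat \<Rightarrow> real"
  assumes "l < d" "l \<noteq> j" "a l \<noteq> b l"
  shows "(\<Prod>l\<in>{..<d}-{j}. if a l = b l then f l else 0) = 0"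
  using assms by (subst prod.remove[of _ l]) auto

lemma Qvol_row_poly:
  assumes a: "a \<in> midx (dim D) (\<lambda>_. deg D)" and j: "j < dim D"
  shows "(\<Sum>e\<in>all_nodes D. Qvol D j (VN a) e * h (pt D e)) =
    (\<Prod>l\<in>{..<dim D}-{j}. ws D (a l)) * (\<Sum>m\<le>deg D. Q1D (deg D) (xs D) (ws D) (a j) m * h ((pt D (VN a))(j := xs D m)))"
proof -
  have "(\<Sum>e\<in>all_nodes D. Qvol D j (VN a) e * h (pt D e)) =
     (\<Sum>m\<le>deg D. Qvol D j (VN a) (VN (a(j:=m))) * h (pt D (VN (a(j:=m)))))"
  proof (rule sum_all_nodes_line[OF a j])
    fix b assume b: "b \<in> midx (dim D) (\<lambda>_. deg D)" and "\<exists>l<dim D. l \<noteq> j \<and> a l \<noteq> b l"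
    then obtain l where "l < dim D" "l \<noteq> j" "a l \<noteq> b l" by auto
    then have pz: "(\<Prod>l\<in>{..<dim D}-{j}. if a l = b l then ws D (a l) else 0) = 0"
      by (rule prod_if_eq_zero)
    show "Qvol D j (VN a) (VN b) * h (pt D (VN b)) = 0"
      by (simp only: Qvol.simps pz) simp
  next
    fix e assume "e \<notin> vol_nodes D"
    then show "Qvol D j (VN a) e * h (pt D e) = 0" by (cases e) auto
  qed
  also have "\<dots> = (\<Sum>m\<le>deg D. (\<Prod>l\<in>{..<dim D}-{j}. ws D (a l)) * (Q1D (deg D) (xs D) (ws D) (a j) m * h ((pt D (VN a))(j := xs D m))))"
    using midx_update[OF a j] a by (intro sum.cong refl) (simp add: pt_VN_upd prod_if_eq_fun_upd del: pt.simps)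
  finally show ?thesis by (simp add: sum_distrib_left)
qed

lemma Qvol_col_poly:
  assumes a: "a \<in> midx (dim D) (\<lambda>_. deg D)" and j: "j < dim D"
  shows "(\<Sum>e\<in>all_nodes D. Qvol D j e (VN a) * h (pt D e)) =
    (\<Prod>l\<in>{..<dim D}-{j}. ws D (a l)) * (\<Sum>m\<le>deg D. Q1D (deg D) (xs D) (ws D) m (a j) * h ((pt D (VN a))(j := xs D m)))"
proof -
  have "(\<Sum>e\<in>all_nodes D. Qvol D j e (VN a) * h (pt D e)) =
     (\<Sum>m\<le>deg D. Qvol D j (VN (a(j:=m))) (VN a) * h (pt D (VN (a(j:=m)))))"
  proof (rule sum_all_nodes_line[OF a j])
    fix b assume b: "b \<in> midx (dim D) (\<lambda>_. deg D)" and "\<exists>l<dim D. l \<noteq> j \<and> a l \<noteq> b l"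
    then obtain l where "l < dim D" "l \<noteq> j" "b l \<noteq> a l" by auto
    then have pz: "(\<Prod>l\<in>{..<dim D}-{j}. if b l = a l then ws D (b l) else 0) = 0"
      by (rule prod_if_eq_zero)
    show "Qvol D j (VN b) (VN a) * h (pt D (VN b)) = 0"
      by (simp only: Qvol.simps pz) simp
  next
    fix e assume "e \<notin> vol_nodes D"
    then show "Qvol D j e (VN a) * h (pt D e) = 0" by (cases e) auto
  qed
  also have "\<dots> = (\<Sum>m\<le>deg D. (\<Prod>l\<in>{..<dim D}-{j}. ws D (a l)) * (Q1D (deg D) (xs D) (ws D) m (a j) * h ((pt D (VN a))(j := xs D m))))"
  proof (intro sum.cong refl)
    fix m assume m: "m \<in> {..deg D}"
    have "(\<Prod>l\<in>{..<dim D}-{j}. if (a(j:=m)) l = a l then ws D ((a(j:=m)) l) else 0) = (\<Prod>l\<in>{..<dim D}-{j}. ws D (a l))"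
      by (intro prod.cong) auto
    then show "Qvol D j (VN (a(j:=m))) (VN a) * h (pt D (VN (a(j:=m)))) =
       (\<Prod>l\<in>{..<dim D}-{j}. ws D (a l)) * (Q1D (deg D) (xs D) (ws D) m (a j) * h ((pt D (VN a))(j := xs D m)))"
      using midx_update[OF a j] a m by (simp add: pt_VN_upd del: pt.simps)
  qed
  finally show ?thesis by (simp add: sum_distrib_left)
qed

lemma midx_face_projection:
  assumes a: "a \<in> midx (dim D) (\<lambda>_. deg D)"
  shows "a(j:=0) \<in> fidx (dim D) (deg D) j"
  using midxD[OF a] by (intro fidxI) auto

lemma sgnb_simps[simp]: "sgnb True = 1" "sgnb False = -1" by (auto simp: sgnb_def)

lemma Emat_Bf_col_support:
  assumes a: "a \<in> midx (dim D) (\<lambda>_. deg D)"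
    and e: "e \<notin> {FN j True (a(j:=0)), FN j False (a(j:=0))}"
  shows "Emat D e (VN a) * Bf D j e e = 0"
proof (cases e)
  case (FN k s b)
  show ?thesis
  proof (cases "k = j \<and> FN k s b \<in> face_nodes D")
    case True
    then have b: "b \<in> fidx (dim D) (deg D) j" by auto
    have "b \<noteq> a(j:=0)" using e FN True by auto
    then obtain l where l: "b l \<noteq> (a(j:=0)) l" by (metis ext)
    have "l \<noteq> j" "l < dim D"
      using l fidxD[OF b, of l] midxD[OF a, of l] by (auto split: if_split_asm)
    then have "(\<forall>l<dim D. l \<noteq> j \<longrightarrow> a l = b l) = False" using l by auto
    then show ?thesis using FN True by (simp only: Emat.simps) simp
  qed (use FN in \<open>auto simp: Bf_def\<close>)
qed (auto simp: Bf_def)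

lemma Emat_Bf_col_poly:
  assumes a: "a \<in> midx (dim D) (\<lambda>_. deg D)" and j: "j < dim D"
  shows "(\<Sum>e\<in>all_nodes D. Emat D e (VN a) * Bf D j e e * h (pt D e)) =
    (\<Prod>l\<in>{..<dim D}-{j}. ws D (a l)) * (lag (deg D) (xs D) (a j) 1 * h ((pt D (VN a))(j := 1))
      - lag (deg D) (xs D) (a j) (-1) * h ((pt D (VN a))(j := -1)))"
proof -
  let ?a0 = "a(j:=0)"
  let ?F = "\<lambda>e. Emat D e (VN a) * Bf D j e e * h (pt D e)"
  have a0: "?a0 \<in> fidx (dim D) (deg D) j" by (rule midx_face_projection[OF a])
  have "(\<Sum>e\<in>all_nodes D. ?F e) = (\<Sum>e\<in>{FN j True ?a0, FN j False ?a0}. ?F e)"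
    using a0 j Emat_Bf_col_support[OF a]
    by (intro sum.mono_neutral_right) (auto simp: all_nodes_def)
  also have "\<dots> = (\<Prod>l\<in>{..<dim D}-{j}. ws D (a l)) * (lag (deg D) (xs D) (a j) 1 * h ((pt D (VN a))(j := 1))
      - lag (deg D) (xs D) (a j) (-1) * h ((pt D (VN a))(j := -1)))"
  proof -
    have w: "(\<Prod>l\<in>{..<dim D}-{j}. ws D (?a0 l)) = (\<Prod>l\<in>{..<dim D}-{j}. ws D (a l))"
      by (intro prod.cong) auto
    have p: "pt D (FN j s ?a0) = (pt D (VN a))(j := sgnb s)" for s
      by (auto simp: fun_eq_iff)
    have E: "Emat D (FN j s ?a0) (VN a) = lag (deg D) (xs D) (a j) (sgnb s)" for s
      using a0 j a by simp
    show ?thesis using w j a0 a by (simp add: p E Bf_def algebra_simps del: pt.simps)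
  qed
  finally show ?thesis .
qed

lemma fidx_imp_midx: "b \<in> fidx d N k \<Longrightarrow> b \<in> midx d (\<lambda>_. N)"
  using fidxD[of b d N k] by (intro midxI) (metis le0 less_or_eq_imp_le not_le)

lemma tpoly_lag_prod:
  assumes "\<forall>l\<in>L. b l \<le> N" "L \<subseteq> {..<d}"
  shows "tpoly d (\<lambda>l'. if l' \<in> L then N else 0) (\<lambda>y. \<Prod>l\<in>L. lag N x (b l) (y l))"
proof -
  have fL: "finite L" using assms(2) finite_subset by blast
  have "tpoly d (\<lambda>l'. \<Sum>l\<in>L. if l' = l then N else 0) (\<lambda>y. \<Prod>l\<in>L. poly (lag_poly N x (b l)) (y l))"
  proof (rule tpoly_prod[OF fL])
    fix l assume l: "l \<in> L"
    show "tpoly d (\<lambda>l'. if l' = l then N else 0) (\<lambda>y. poly (lag_poly N x (b l)) (y l))"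
      using l assms by (intro tpoly_poly_var) (auto intro: degree_lag_poly)
  qed
  then show ?thesis using fL by (simp add: poly_lag_poly)
qed

lemma tpoly_lag_prod_mult:
  assumes k: "k < dim D" and b: "b \<in> fidx (dim D) (deg D) k"
    and h: "tpoly (dim D) Dh h" and DhN: "\<forall>l<dim D. Dh l \<le> deg D"
    and Dhk: "\<forall>l<dim D. l \<noteq> k \<longrightarrow> Dh l \<le> M"
  shows "tpoly (dim D) (\<lambda>_. deg D + M) (\<lambda>y. (\<Prod>l\<in>{..<dim D}-{k}. lag (deg D) (xs D) (b l) (y l)) * h y)"
proof -
  have "tpoly (dim D) (\<lambda>l'. (if l' \<in> {..<dim D}-{k} then deg D else 0) + Dh l')
      (\<lambda>y. (\<Prod>l\<in>{..<dim D}-{k}. lag (deg D) (xs D) (b l) (y l)) * h y)"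
    using fidxD[OF b] by (intro tpoly_mult h tpoly_lag_prod) auto
  then show ?thesis
    by (rule tpoly_mono) (use DhN Dhk in auto)
qed

section \<open>The mortar discretization\<close>

locale mortar_discretization = exact_quadrature "deg D" "xs D" "ws D" for D :: disc +
  fixes Nf Nm :: nat
  assumes mortar_on_face: "\<forall>k<dim D. \<forall>s. \<forall>j<nmor D k s. xmor D k s j k = sgnb s \<and>
                           (\<forall>l<dim D. -1 \<le> xmor D k s j l \<and> xmor D k s j l \<le> 1)"
    and face_exact: "\<forall>k<dim D. \<forall>s. \<forall>p. tpoly (dim D) (\<lambda>_. deg D + Nf) p \<longrightarrow>
                       (\<Sum>c\<in>face_nodes_of D k s. wt D c * p (pt D c)) = face_int (dim D) k s p"
    and mortar_exact: "\<forall>k<dim D. \<forall>s. \<forall>p. tpoly (dim D) (\<lambda>_. deg D + Nm) p \<longrightarrow>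
                       (\<Sum>c\<in>mortar_nodes_of D k s. wt D c * p (pt D c)) = face_int (dim D) k s p"
begin

lemma wt_face_pos:
  assumes c: "c \<in> face_nodes D"
  shows "0 < wt D c"
proof -
  obtain k s b where cb: "c = FN k s b" and k: "k < dim D" and b: "b \<in> fidx (dim D) (deg D) k"
    using c by (auto simp: face_nodes_def face_nodes_of_def)
  have "\<And>l. l \<in> {..<dim D}-{k} \<Longrightarrow> 0 < ws D (b l)"
    using fidxD[OF b] weights_pos by auto
  then show ?thesis using cb by (simp, intro prod_pos) auto
qed

lemma Bf_Efm: "Bf D j c c * Efm D c e = Bm D j e e * Emf D e c"
proof (cases "c \<in> face_nodes D \<and> e \<in> mortar_nodes D")
  case True
  then have w: "wt D c \<noteq> 0" using wt_face_pos by force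
  from True obtain k s b k' s' jj where c: "c = FN k s b" and e: "e = MN k' s' jj"
    by (cases c; cases e) auto
  show ?thesis using True w c e by (auto simp: Bf_def Bm_def Efm_def)
next
  case False
  then show ?thesis
    by (cases c; cases e) (auto simp: Bf_def Bm_def Efm_def)
qed

lemma Qhat_sbp: "Qhat D j c e + Qhat D j e c = Bm D j c e"
proof -
  have "Bm D j e c = Bm D j c e" by (auto simp: Bm_def)
  then show ?thesis using Bf_Efm[of j c e] Bf_Efm[of j e c]
    by (simp add: Qhat_blocks algebra_simps)
qed

lemma Qhat_row_vol:
  assumes a: "a \<in> midx (dim D) (\<lambda>_. deg D)" and j: "j < dim D"
    and h: "tpoly (dim D) Dh h" and Dhj: "Dh j \<le> deg D"
  shows "(\<Sum>e\<in>all_nodes D. Qhat D j (VN a) e * h (pt D e)) =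
     wt D (VN a) * deriv (\<lambda>\<tau>. h ((pt D (VN a))(j:=\<tau>))) (xs D (a j))"
proof -
  let ?N = "deg D" and ?x = "xs D" and ?w = "ws D" and ?y = "pt D (VN a)"
  let ?W = "\<Prod>l\<in>{..<dim D}-{j}. ws D (a l)"
  have aj: "a j \<le> ?N" using midxD[OF a, of j] j by simp
  obtain P where P: "degree P \<le> Dh j" and hP: "\<And>\<tau>. h (?y(j:=\<tau>)) = poly P \<tau>"
    using tpoly_restrict_line[OF h j, of ?y] by blast
  have dP: "degree P \<le> ?N" using P Dhj by simp
  have Q: "Qhat D j (VN a) e = 1/2 * (Qvol D j (VN a) e - Qvol D j e (VN a) + Emat D e (VN a) * Bf D j e e)" for e
    by (simp add: Qhat_blocks Bf_def Bm_def)
  have "(\<Sum>e\<in>all_nodes D. Qhat D j (VN a) e * h (pt D e)) =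
      1/2 * ((\<Sum>e\<in>all_nodes D. Qvol D j (VN a) e * h (pt D e)) - (\<Sum>e\<in>all_nodes D. Qvol D j e (VN a) * h (pt D e))
        + (\<Sum>e\<in>all_nodes D. Emat D e (VN a) * Bf D j e e * h (pt D e)))"
    unfolding Q by (simp add: sum_distrib_left sum_subtractf sum.distrib algebra_simps)
  also have "\<dots> = 1/2 * ?W * ((\<Sum>m\<le>?N. Q1D ?N ?x ?w (a j) m * poly P (?x m))
       - (\<Sum>m\<le>?N. Q1D ?N ?x ?w m (a j) * poly P (?x m))
       + (lag ?N ?x (a j) 1 * poly P 1 - lag ?N ?x (a j) (-1) * poly P (-1)))"
    unfolding Qvol_row_poly[OF a j] Qvol_col_poly[OF a j] Emat_Bf_col_poly[OF a j] hP
    by (simp add: algebra_simps)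
  also have "\<dots> = ?W * ?w (a j) * poly (pderiv P) (?x (a j))"
    unfolding Q1D_skew_apply_poly[OF aj dP] by simp
  also have "\<dots> = wt D (VN a) * deriv (\<lambda>\<tau>. h (?y(j:=\<tau>))) (?x (a j))"
  proof -
    have "deriv (\<lambda>\<tau>. h (?y(j:=\<tau>))) (?x (a j)) = poly (pderiv P) (?x (a j))"
      unfolding hP by (rule DERIV_imp_deriv) (rule poly_DERIV)
    moreover have "wt D (VN a) = ?w (a j) * ?W"
      using j by (simp add: prod.remove[of "{..<dim D}" j])
    ultimately show ?thesis by (simp add: mult_ac)
  qed
  finally show ?thesis .
qed

lemma Emat_row_poly:
  assumes k: "k < dim D" and b: "b \<in> fidx (dim D) (deg D) k"
    and h: "tpoly (dim D) Dh h" and Dhk: "Dh k \<le> deg D"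
  shows "(\<Sum>e\<in>all_nodes D. Emat D (FN k s b) e * h (pt D e)) = h (pt D (FN k s b))"
proof -
  let ?N = "deg D" and ?x = "xs D" and ?z = "pt D (FN k s b)"
  have bm: "b \<in> midx (dim D) (\<lambda>_. deg D)" by (rule fidx_imp_midx[OF b])
  have "(\<Sum>e\<in>all_nodes D. Emat D (FN k s b) e * h (pt D e)) =
      (\<Sum>m\<le>?N. Emat D (FN k s b) (VN (b(k:=m))) * h (pt D (VN (b(k:=m)))))"
  proof (rule sum_all_nodes_line[OF bm k])
    fix a assume a: "a \<in> midx (dim D) (\<lambda>_. deg D)" and "\<exists>l<dim D. l \<noteq> k \<and> b l \<noteq> a l"
    then have nc: "(\<forall>l<dim D. l \<noteq> k \<longrightarrow> a l = b l) = False" by auto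
    show "Emat D (FN k s b) (VN a) * h (pt D (VN a)) = 0"
      by (simp only: Emat.simps nc) simp
  next
    fix e assume "e \<notin> vol_nodes D"
    then show "Emat D (FN k s b) e * h (pt D e) = 0" by (cases e) auto
  qed
  also have "\<dots> = (\<Sum>m\<le>?N. lag ?N ?x m (sgnb s) * h (?z(k := ?x m)))"
  proof (intro sum.cong refl)
    fix m assume m: "m \<in> {..?N}"
    have "pt D (VN (b(k:=m))) = ?z(k := ?x m)" by (auto simp: fun_eq_iff)
    moreover have "b(k:=m) \<in> midx (dim D) (\<lambda>_. deg D)" using midx_update[OF bm k] m by simp
    ultimately show "Emat D (FN k s b) (VN (b(k:=m))) * h (pt D (VN (b(k:=m)))) = lag ?N ?x m (sgnb s) * h (?z(k := ?x m))"
      using k b by (simp del: pt.simps)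
  qed
  also have "\<dots> = h ?z"
  proof -
    obtain P where P: "degree P \<le> Dh k" and hP: "\<And>\<tau>. h (?z(k:=\<tau>)) = poly P \<tau>"
      using tpoly_restrict_line[OF h k, of ?z] by blast
    have dP: "degree P \<le> ?N" using P Dhk by simp
    have "(\<Sum>m\<le>?N. lag ?N ?x m (sgnb s) * h (?z(k := ?x m))) = poly P (sgnb s)"
      unfolding hP lag_interpolation[OF nodes_inj dP, of "sgnb s"] by (simp add: mult_ac)
    also have "\<dots> = h (?z(k := sgnb s))" by (rule hP[symmetric])
    also have "?z(k := sgnb s) = ?z" by (auto simp: fun_eq_iff)
    finally show ?thesis .
  qed
  finally show ?thesis .
qed

lemma face_quadrature_lag_prod:
  assumes k: "k < dim D" and b: "b \<in> fidx (dim D) (deg D) k"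
  shows "(\<Sum>e\<in>face_nodes_of D k s. wt D e * ((\<Prod>l\<in>{..<dim D}-{k}. lag (deg D) (xs D) (b l) (pt D e l)) * h (pt D e)))
     = wt D (FN k s b) * h (pt D (FN k s b))"
proof -
  let ?L = "{..<dim D}-{k}"
  have "(\<Sum>e\<in>face_nodes_of D k s. wt D e * ((\<Prod>l\<in>?L. lag (deg D) (xs D) (b l) (pt D e l)) * h (pt D e)))
     = (\<Sum>b'\<in>fidx (dim D) (deg D) k. wt D (FN k s b') * ((\<Prod>l\<in>?L. lag (deg D) (xs D) (b l) (pt D (FN k s b') l)) * h (pt D (FN k s b'))))"
    unfolding face_nodes_of_def by (simp add: sum.reindex inj_on_def)
  also have "\<dots> = (\<Sum>b'\<in>fidx (dim D) (deg D) k. if b' = b then wt D (FN k s b) * h (pt D (FN k s b)) else 0)"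
  proof (intro sum.cong refl)
    fix b' assume b': "b' \<in> fidx (dim D) (deg D) k"
    show "wt D (FN k s b') * ((\<Prod>l\<in>?L. lag (deg D) (xs D) (b l) (pt D (FN k s b') l)) * h (pt D (FN k s b'))) =
      (if b' = b then wt D (FN k s b) * h (pt D (FN k s b)) else 0)"
    proof (cases "b' = b")
      case True
      have "(\<Prod>l\<in>?L. lag (deg D) (xs D) (b l) (pt D (FN k s b) l)) = 1"
      proof (intro prod.neutral ballI)
        fix l assume l: "l \<in> ?L"
        then show "lag (deg D) (xs D) (b l) (pt D (FN k s b) l) = 1"
          using fidxD[OF b, of l] lag_at_node[OF nodes_inj] by auto
      qed
      then show ?thesis using True by simp
    next
      case False
      then have "\<exists>l. b' l \<noteq> b l" by (metis ext)
      then obtain l where l: "b' l \<noteq> b l" by blast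
      have lL: "l \<in> ?L" using l fidxD[OF b, of l] fidxD[OF b', of l] by (cases "l < dim D"; cases "l = k") auto
      have "lag (deg D) (xs D) (b l) (pt D (FN k s b') l) = 0"
        using lL l fidxD[OF b, of l] fidxD[OF b', of l] lag_at_node[OF nodes_inj] by auto
      then have "(\<Prod>l\<in>?L. lag (deg D) (xs D) (b l) (pt D (FN k s b') l)) = 0"
        using lL by (subst prod.remove[of _ l]) auto
      then show ?thesis using False by simp
    qed
  qed
  also have "\<dots> = wt D (FN k s b) * h (pt D (FN k s b))"
    using b by (simp add: finite_fidx)
  finally show ?thesis .
qed

lemma Efm_row_mortar_quadrature:
  assumes k: "k < dim D" and b: "b \<in> fidx (dim D) (deg D) k"
  shows "(\<Sum>e\<in>all_nodes D. Efm D (FN k s b) e * h (pt D e)) = (1 / wt D (FN k s b)) *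
    (\<Sum>e\<in>mortar_nodes_of D k s. wt D e * ((\<Prod>l\<in>{..<dim D}-{k}. lag (deg D) (xs D) (b l) (pt D e l)) * h (pt D e)))"
proof -
  let ?c = "FN k s b"
  have "(\<Sum>e\<in>all_nodes D. Efm D ?c e * h (pt D e)) = (\<Sum>e\<in>mortar_nodes_of D k s. Efm D ?c e * h (pt D e))"
  proof (rule sum.mono_neutral_right)
    show "\<forall>e\<in>all_nodes D - mortar_nodes_of D k s. Efm D ?c e * h (pt D e) = 0"
    proof
      fix e assume "e \<in> all_nodes D - mortar_nodes_of D k s"
      then show "Efm D ?c e * h (pt D e) = 0" by (cases e) (auto simp: Efm_def mortar_nodes_of_def)
    qed
  qed (use k in \<open>auto simp: all_nodes_def mortar_nodes_of_def\<close>)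
  also have "\<dots> = (\<Sum>e\<in>mortar_nodes_of D k s. (1 / wt D ?c) *
      (wt D e * ((\<Prod>l\<in>{..<dim D}-{k}. lag (deg D) (xs D) (b l) (pt D e l)) * h (pt D e))))"
  proof (intro sum.cong refl)
    fix e assume "e \<in> mortar_nodes_of D k s"
    then obtain jj where e: "e = MN k s jj" and jj: "jj < nmor D k s" by (auto simp: mortar_nodes_of_def)
    show "Efm D ?c e * h (pt D e) = (1 / wt D ?c) *
      (wt D e * ((\<Prod>l\<in>{..<dim D}-{k}. lag (deg D) (xs D) (b l) (pt D e l)) * h (pt D e)))"
      using e jj k b by (simp add: Efm_def del: wt.simps)
  qed
  finally show ?thesis by (simp only: sum_distrib_left)
qed

text \<open>\<open>E\<^sub>f\<^sub>m\<close> is the \<open>L\<^sup>2\<close> projection back from the mortar, exact here because both the face and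
  the mortar rule integrate the product with the face Lagrange basis exactly.\<close>
lemma Efm_row_poly:
  assumes k: "k < dim D" and b: "b \<in> fidx (dim D) (deg D) k"
    and h: "tpoly (dim D) Dh h" and DhN: "\<forall>l<dim D. Dh l \<le> deg D"
    and Dhk: "\<forall>l<dim D. l \<noteq> k \<longrightarrow> Dh l \<le> Nf \<and> Dh l \<le> Nm"
  shows "(\<Sum>e\<in>all_nodes D. Efm D (FN k s b) e * h (pt D e)) = h (pt D (FN k s b))"
proof -
  let ?c = "FN k s b"
  define p where "p y = (\<Prod>l\<in>{..<dim D}-{k}. lag (deg D) (xs D) (b l) (y l)) * h y" for y
  have wc: "0 < wt D ?c" using k b by (intro wt_face_pos) simp
  have tp: "tpoly (dim D) (\<lambda>_. deg D + M) p" if "\<forall>l<dim D. l \<noteq> k \<longrightarrow> Dh l \<le> M" for M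
    unfolding p_def using tpoly_lag_prod_mult[OF k b h DhN that] .
  have "(\<Sum>e\<in>all_nodes D. Efm D ?c e * h (pt D e)) = (1 / wt D ?c) * (\<Sum>e\<in>mortar_nodes_of D k s. wt D e * p (pt D e))"
    unfolding p_def by (rule Efm_row_mortar_quadrature[OF k b])
  also have "\<dots> = (1 / wt D ?c) * face_int (dim D) k s p"
    using mortar_exact[rule_format, OF k tp] Dhk by simp
  also have "\<dots> = (1 / wt D ?c) * (\<Sum>e\<in>face_nodes_of D k s. wt D e * p (pt D e))"
    using face_exact[rule_format, OF k tp] Dhk by simp
  also have "\<dots> = h (pt D ?c)"
    using wc unfolding p_def face_quadrature_lag_prod[OF k b] by (simp del: wt.simps pt.simps)
  finally show ?thesis .
qed

text \<open>Degrees \<open>Dh\<close> of a coefficient \<open>h\<close> paired with the direction \<open>j\<close>: in the other directions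
  the product of \<open>h\<close> with a face Lagrange polynomial is still integrated exactly by the face and
  mortar rules.\<close>
definition admissible :: "nat \<Rightarrow> (nat \<Rightarrow> nat) \<Rightarrow> ((nat \<Rightarrow> real) \<Rightarrow> real) \<Rightarrow> bool" where
  "admissible j Dh h \<longleftrightarrow> tpoly (dim D) Dh h \<and> (\<forall>l<dim D. Dh l \<le> deg D) \<and>
     (\<forall>l<dim D. l \<noteq> j \<longrightarrow> Dh l \<le> Nf \<and> Dh l \<le> Nm)"

lemma Qhat_row_face:
  assumes k: "k < dim D" and b: "b \<in> fidx (dim D) (deg D) k"
    and j: "j < dim D" and G: "admissible j Dh h"
  shows "(\<Sum>e\<in>all_nodes D. Qhat D j (FN k s b) e * h (pt D e)) = 0"
proof -
  let ?c = "FN k s b"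
  have Q: "Qhat D j ?c e = 1/2 * (Bf D j ?c ?c * Efm D ?c e - Bf D j ?c ?c * Emat D ?c e)" for e
    by (cases e) (simp_all add: Qhat_blocks Bm_def)
  have "(\<Sum>e\<in>all_nodes D. Qhat D j ?c e * h (pt D e)) =
     1/2 * Bf D j ?c ?c * ((\<Sum>e\<in>all_nodes D. Efm D ?c e * h (pt D e)) - (\<Sum>e\<in>all_nodes D. Emat D ?c e * h (pt D e)))"
    unfolding Q by (simp add: sum_distrib_left sum_subtractf algebra_simps)
  also have "\<dots> = 0"
  proof (cases "j = k")
    case True
    have h: "tpoly (dim D) Dh h" and DhN: "\<forall>l<dim D. Dh l \<le> deg D"
      and Dhk: "\<forall>l<dim D. l \<noteq> k \<longrightarrow> Dh l \<le> Nf \<and> Dh l \<le> Nm"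
      using G True by (auto simp: admissible_def)
    show ?thesis
      using Efm_row_poly[OF k b h DhN Dhk] Emat_row_poly[OF k b h] DhN k by simp
  next
    case False
    then show ?thesis by (simp add: Bf_def)
  qed
  finally show ?thesis .
qed

lemma Emf_row_poly:
  assumes c: "MN k s jj \<in> mortar_nodes D"
    and h: "tpoly (dim D) Dh h" and DhN: "\<forall>l<dim D. l \<noteq> k \<longrightarrow> Dh l \<le> deg D"
  shows "(\<Sum>e\<in>all_nodes D. Emf D (MN k s jj) e * h (pt D e)) = h (pt D (MN k s jj))"
proof -
  let ?c = "MN k s jj"
  have k: "k < dim D" and jj: "jj < nmor D k s" using c by auto
  have "(\<Sum>e\<in>all_nodes D. Emf D ?c e * h (pt D e)) = (\<Sum>e\<in>face_nodes_of D k s. Emf D ?c e * h (pt D e))"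
  proof (rule sum.mono_neutral_right)
    show "\<forall>e\<in>all_nodes D - face_nodes_of D k s. Emf D ?c e * h (pt D e) = 0"
    proof
      fix e assume "e \<in> all_nodes D - face_nodes_of D k s"
      then show "Emf D ?c e * h (pt D e) = 0" by (cases e) (auto simp: face_nodes_of_def)
    qed
  qed (use k in \<open>auto simp: all_nodes_def face_nodes_of_def\<close>)
  also have "\<dots> = (\<Sum>b\<in>fidx (dim D) (deg D) k. Emf D ?c (FN k s b) * h (pt D (FN k s b)))"
    unfolding face_nodes_of_def by (simp add: sum.reindex inj_on_def del: pt.simps)
  also have "\<dots> = (\<Sum>b\<in>fidx (dim D) (deg D) k. (\<Prod>l\<in>{..<dim D}-{k}. lag (deg D) (xs D) (b l) (xmor D k s jj l))
       * h (\<lambda>l. if l = k then sgnb s else xs D (b l)))"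
    using k jj by (intro sum.cong refl) simp
  also have "\<dots> = h (xmor D k s jj)"
    by (rule tensor_lag_interpolation[OF k h DhN nodes_inj]) (use mortar_on_face k jj in auto)
  finally show ?thesis by simp
qed

lemma Qhat_row_mortar:
  assumes c: "MN k s jj \<in> mortar_nodes D"
    and j: "j < dim D" and G: "admissible j Dh h"
  shows "(\<Sum>e\<in>all_nodes D. Qhat D j (MN k s jj) e * h (pt D e)) = 0"
proof -
  let ?c = "MN k s jj"
  have Q: "Qhat D j ?c e = 1/2 * (Bm D j ?c e - Bm D j ?c ?c * Emf D ?c e)" for e
    by (cases e) (simp_all add: Qhat_blocks Bf_def)
  have ca: "?c \<in> all_nodes D" using c by (simp add: all_nodes_def)
  have B: "(\<Sum>e\<in>all_nodes D. Bm D j ?c e * h (pt D e)) = Bm D j ?c ?c * h (pt D ?c)"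
    by (subst sum.remove[OF finite_all_nodes ca]) (auto simp: Bm_def split: if_split_asm intro!: sum.neutral)
  have "(\<Sum>e\<in>all_nodes D. Qhat D j ?c e * h (pt D e)) =
     1/2 * Bm D j ?c ?c * (h (pt D ?c) - (\<Sum>e\<in>all_nodes D. Emf D ?c e * h (pt D e)))"
  proof -
    have "(\<Sum>e\<in>all_nodes D. Qhat D j ?c e * h (pt D e)) =
       (\<Sum>e\<in>all_nodes D. 1/2 * (Bm D j ?c e * h (pt D e)) - (1/2 * Bm D j ?c ?c) * (Emf D ?c e * h (pt D e)))"
      unfolding Q by (intro sum.cong refl) (simp add: algebra_simps)
    then show ?thesis unfolding sum_subtractf sum_distrib_left[symmetric] B
      by (simp add: algebra_simps del: pt.simps)
  qed
  also have "\<dots> = 0"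
  proof (cases "j = k")
    case True
    then show ?thesis using G Emf_row_poly[OF c] by (auto simp: admissible_def)
  qed (simp add: Bm_def)
  finally show ?thesis .
qed

text \<open>\<open>Q\<^sub>j\<close> differentiates admissible polynomials exactly in direction \<open>j\<close>: on volume rows by the
  1D summation by parts, on face and mortar rows because interpolation and projection between
  nodes are exact.\<close>
lemma Qhat_row_poly:
  assumes c: "c \<in> all_nodes D" and j: "j < dim D" and G: "admissible j Dh h"
  shows "(\<Sum>e\<in>all_nodes D. Qhat D j c e * h (pt D e)) =
    (if c \<in> vol_nodes D then wt D c * deriv (\<lambda>\<tau>. h ((pt D c)(j:=\<tau>))) (pt D c j) else 0)"
proof (cases c)
  case (VN a)
  then show ?thesis
    using c j G Qhat_row_vol[of a j Dh h] by (auto simp: all_nodes_def admissible_def)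
next
  case (FN k s b)
  then show ?thesis using c Qhat_row_face[OF _ _ j G] by (auto simp: all_nodes_def)
next
  case (MN k s jj)
  then show ?thesis using c Qhat_row_mortar[OF _ j G] by (auto simp: all_nodes_def)
qed

lemma admissible_const: "admissible j (\<lambda>_. 0) (\<lambda>_. a)"
  by (simp add: admissible_def tpoly_const)

lemma Qmet_row_sum_zero:
  assumes c: "c \<in> all_nodes D"
    and G: "\<forall>j<dim D. \<exists>Dh. admissible j Dh (g i j)"
    and div_free: "\<forall>y. (\<Sum>j<dim D. deriv (\<lambda>\<tau>. g i j (y(j := \<tau>))) (y j)) = 0"
  shows "(\<Sum>e\<in>all_nodes D. Qmet D g i c e) = 0"
proof -
  have one: "(\<Sum>e\<in>all_nodes D. Qhat D j c e) = 0" if "j < dim D" for j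
    using Qhat_row_poly[OF c that admissible_const, of 1] by simp
  have metric: "(\<Sum>e\<in>all_nodes D. Qhat D j c e * g i j (pt D e)) =
      (if c \<in> vol_nodes D then wt D c * deriv (\<lambda>\<tau>. g i j ((pt D c)(j:=\<tau>))) (pt D c j) else 0)"
    if "j < dim D" for j
    using G Qhat_row_poly[OF c that] that by blast
  have "(\<Sum>e\<in>all_nodes D. Qmet D g i c e) =
     1/2 * (\<Sum>j<dim D. g i j (pt D c) * (\<Sum>e\<in>all_nodes D. Qhat D j c e)
        + (\<Sum>e\<in>all_nodes D. Qhat D j c e * g i j (pt D e)))"
    unfolding Qmet_def
    by (simp add: sum_distrib_left sum_distrib_right sum.distrib algebra_simps sum.swap[of _ "all_nodes D"])
  also have "\<dots> = 1/2 * (\<Sum>j<dim D. if c \<in> vol_nodes D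
      then wt D c * deriv (\<lambda>\<tau>. g i j ((pt D c)(j:=\<tau>))) (pt D c j) else 0)"
    using one metric by (intro arg_cong[where f="\<lambda>s. 1/2 * s"] sum.cong) auto
  finally show ?thesis
    using div_free[rule_format, of "pt D c"]
    by (cases "c \<in> vol_nodes D") (simp_all add: sum_distrib_left[symmetric])
qed

lemma Qmet_sbp:
  "Qmet D g i c e + Qmet D g i e c = (if c = e \<and> c \<in> mortar_nodes D then nmet D g i c * wt D c else 0)"
proof -
  have "Qmet D g i c e + Qmet D g i e c = 1/2 * (\<Sum>j<dim D. (g i j (pt D c) + g i j (pt D e)) * (Qhat D j c e + Qhat D j e c))"
    unfolding Qmet_def by (simp add: sum.distrib[symmetric] algebra_simps)
  also have "\<dots> = 1/2 * (\<Sum>j<dim D. (g i j (pt D c) + g i j (pt D e)) * Bm D j c e)"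
    by (simp add: Qhat_sbp)
  also have "\<dots> = (if c = e \<and> c \<in> mortar_nodes D then nmet D g i c * wt D c else 0)"
  proof (cases "c = e \<and> c \<in> mortar_nodes D")
    case True
    then show ?thesis by (auto simp: Bm_def nmet_def sum_distrib_left sum_distrib_right algebra_simps)
  next
    case False
    then have "\<And>j. Bm D j c e = 0" by (auto simp: Bm_def)
    then show ?thesis using False by (simp only: if_False mult_zero_right sum.neutral_const)
  qed
  finally show ?thesis .
qed

end

section \<open>Entropy conservation of flux differencing\<close>

lemma sum_skew_flux_differencing:
  fixes Q :: "'x \<Rightarrow> 'x \<Rightarrow> real" and V :: "'x \<Rightarrow> 'b::real_inner" and F :: "'x \<Rightarrow> 'x \<Rightarrow> 'b"
  assumes fin: "finite A"
    and F_sym: "\<And>c e. c \<in> A \<Longrightarrow> e \<in> A \<Longrightarrow> F c e = F e c"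
    and tadmor: "\<And>c e. c \<in> A \<Longrightarrow> e \<in> A \<Longrightarrow> (V c - V e) \<bullet> F c e = P c - P e"
  shows "(\<Sum>c\<in>A. \<Sum>e\<in>A. (Q c e - Q e c) * (V c \<bullet> F c e))
       = (\<Sum>c\<in>A. P c * (\<Sum>e\<in>A. Q c e)) - (\<Sum>e\<in>A. P e * (\<Sum>c\<in>A. Q c e))"
proof -
  have swap: "(\<Sum>c\<in>A. \<Sum>e\<in>A. Q e c * (V c \<bullet> F c e)) = (\<Sum>c\<in>A. \<Sum>e\<in>A. Q c e * (V e \<bullet> F c e))"
    using F_sym by (subst sum.swap) (intro sum.cong refl; simp)
  have "(\<Sum>c\<in>A. \<Sum>e\<in>A. (Q c e - Q e c) * (V c \<bullet> F c e))
      = (\<Sum>c\<in>A. \<Sum>e\<in>A. Q c e * ((V c - V e) \<bullet> F c e))"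
    by (simp add: left_diff_distrib sum_subtractf swap inner_diff_left right_diff_distrib)
  also have "\<dots> = (\<Sum>c\<in>A. \<Sum>e\<in>A. Q c e * P c) - (\<Sum>c\<in>A. \<Sum>e\<in>A. Q c e * P e)"
    using tadmor by (simp add: right_diff_distrib sum_subtractf)
  also have "(\<Sum>c\<in>A. \<Sum>e\<in>A. Q c e * P e) = (\<Sum>e\<in>A. \<Sum>c\<in>A. Q c e * P e)"
    by (rule sum.swap)
  finally show ?thesis by (simp only: sum_distrib_left sum_distrib_right mult_ac)
qed

lemma sbp_col_sum:
  fixes Q :: "'x \<Rightarrow> 'x \<Rightarrow> real"
  assumes fin: "finite A" and e: "e \<in> A"
    and sbp: "\<And>c e. c \<in> A \<Longrightarrow> e \<in> A \<Longrightarrow> Q c e + Q e c = (if c = e then B c else 0)"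
    and row: "\<And>c. c \<in> A \<Longrightarrow> (\<Sum>e\<in>A. Q c e) = 0"
  shows "(\<Sum>c\<in>A. Q c e) = B e"
proof -
  have "(\<Sum>c\<in>A. Q c e) = (\<Sum>c\<in>A. (if c = e then B c else 0) - Q e c)"
    using sbp e by (intro sum.cong refl) (metis add_diff_cancel_right')
  also have "\<dots> = B e - (\<Sum>c\<in>A. Q e c)" using fin e by (simp add: sum_subtractf)
  finally show ?thesis using row e by simp
qed

lemma flux_differencing_entropy_balance:
  fixes Q :: "'x \<Rightarrow> 'x \<Rightarrow> real" and u :: "'x \<Rightarrow> 'a"
    and v :: "'a \<Rightarrow> 'b::real_inner" and fS :: "'a \<Rightarrow> 'a \<Rightarrow> 'b" and f :: "'a \<Rightarrow> 'b"
  assumes fin: "finite A"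
    and sbp: "\<And>c e. c \<in> A \<Longrightarrow> e \<in> A \<Longrightarrow> Q c e + Q e c = (if c = e then B c else 0)"
    and row: "\<And>c. c \<in> A \<Longrightarrow> (\<Sum>e\<in>A. Q c e) = 0"
    and uU: "\<And>c. c \<in> A \<Longrightarrow> u c \<in> U"
    and consistent: "\<forall>u\<in>U. fS u u = f u"
    and symmetric: "\<forall>uL\<in>U. \<forall>uR\<in>U. fS uL uR = fS uR uL"
    and tadmor: "\<forall>uL\<in>U. \<forall>uR\<in>U. (v uL - v uR) \<bullet> fS uL uR = psi uL - psi uR"
  shows "(\<Sum>c\<in>A. v (u c) \<bullet> (\<Sum>e\<in>A. (2 * Q c e) *\<^sub>R fS (u c) (u e)))
       = (\<Sum>c\<in>A. B c * (v (u c) \<bullet> f (u c) - psi (u c)))"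
proof -
  let ?V = "\<lambda>c. v (u c)" and ?F = "\<lambda>c e. fS (u c) (u e)" and ?P = "\<lambda>c. psi (u c)"
  have "(\<Sum>c\<in>A. v (u c) \<bullet> (\<Sum>e\<in>A. (2 * Q c e) *\<^sub>R fS (u c) (u e)))
      = (\<Sum>c\<in>A. \<Sum>e\<in>A. (Q c e - Q e c) * (?V c \<bullet> ?F c e) + (if c = e then B c else 0) * (?V c \<bullet> ?F c e))"
    unfolding inner_sum_right
    by (intro sum.cong refl) (simp add: sbp[symmetric] algebra_simps)
  also have "\<dots> = (\<Sum>c\<in>A. ?P c * (\<Sum>e\<in>A. Q c e)) - (\<Sum>e\<in>A. ?P e * (\<Sum>c\<in>A. Q c e))
      + (\<Sum>c\<in>A. B c * (?V c \<bullet> f (u c)))"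
    using sum_skew_flux_differencing[OF fin, of ?F ?V ?P Q] uU symmetric tadmor consistent fin
    by (simp add: sum.distrib if_0_mult sum.delta' cong: sum.cong)
  also have "\<dots> = (\<Sum>c\<in>A. B c * (v (u c) \<bullet> f (u c) - psi (u c)))"
    using row sbp_col_sum[OF fin _ sbp row]
    by (simp add: algebra_simps sum_subtractf)
  finally show ?thesis .
qed

section \<open>The semi-discrete entropy balance\<close>

lemma Pmat_transpose_entropy_vars:
  fixes v :: "'a \<Rightarrow> 'b::real_vector"
  assumes c: "c \<in> all_nodes D"
    and fd: "\<forall>c\<in>face_nodes D. vface D v uh c \<in> V"
    and md: "\<forall>c\<in>mortar_nodes D. vmort D v uh c \<in> V"
    and inv: "\<forall>w\<in>V. uofv w \<in> U \<and> v (uofv w) = w"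
  shows "(\<Sum>a\<in>vol_nodes D. Pmat D a c *\<^sub>R v (uh a)) = v (utilde D v uofv uh c)"
proof (cases c)
  case (VN a')
  then have cv: "c \<in> vol_nodes D" using c by (auto simp: all_nodes_def)
  have "(\<Sum>a\<in>vol_nodes D. Pmat D a c *\<^sub>R v (uh a)) = (\<Sum>a\<in>vol_nodes D. if a = c then v (uh a) else 0)"
    using cv by (intro sum.cong refl) (simp add: Pmat_def)
  also have "\<dots> = v (uh c)" using cv by simp
  finally show ?thesis using VN by (simp add: utilde_def)
next
  case (FN k s b)
  then have cf: "c \<in> face_nodes D" using c by (auto simp: all_nodes_def)
  have "(\<Sum>a\<in>vol_nodes D. Pmat D a c *\<^sub>R v (uh a)) = vface D v uh c"
    unfolding vface_def using FN cf by (intro sum.cong refl) (simp add: Pmat_def)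
  then show ?thesis using FN cf fd inv by (simp add: utilde_def)
next
  case (MN k s jj)
  then have cm: "c \<in> mortar_nodes D" using c by (auto simp: all_nodes_def)
  have "(\<Sum>a\<in>vol_nodes D. Pmat D a c *\<^sub>R v (uh a)) =
      (\<Sum>a\<in>vol_nodes D. (\<Sum>b\<in>all_nodes D. Emat D b a * Emf D c b) *\<^sub>R v (uh a))"
    using MN cm by (intro sum.cong refl) (simp add: Pmat_def mmul_def mtr_def)
  also have "\<dots> = (\<Sum>b\<in>all_nodes D. Emf D c b *\<^sub>R (\<Sum>a\<in>vol_nodes D. Emat D b a *\<^sub>R v (uh a)))"
    by (simp add: scaleR_sum_left scaleR_sum_right sum.swap[of _ "vol_nodes D"] mult.commute)
  also have "\<dots> = (\<Sum>b\<in>all_nodes D. Emf D c b *\<^sub>R vface D v uh b)"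
    by (simp add: vface_def)
  also have "\<dots> = (\<Sum>b\<in>face_nodes D. Emf D c b *\<^sub>R vface D v uh b)"
  proof (rule sum.mono_neutral_right)
    show "face_nodes D \<subseteq> all_nodes D" by (auto simp: all_nodes_def)
    show "\<forall>b\<in>all_nodes D - face_nodes D. Emf D c b *\<^sub>R vface D v uh b = 0"
    proof
      fix b assume "b \<in> all_nodes D - face_nodes D"
      then show "Emf D c b *\<^sub>R vface D v uh b = 0" using MN by (cases b) auto
    qed
  qed simp
  also have "\<dots> = vmort D v uh c" by (simp add: vmort_def)
  finally show ?thesis using MN cm md inv by (simp add: utilde_def)
qed
lemma utilde_in_domain:
  assumes c: "c \<in> all_nodes D"
    and vol: "\<forall>a\<in>vol_nodes D. uh a \<in> U"
    and fd: "\<forall>c\<in>face_nodes D. vface D v uh c \<in> V"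
    and md: "\<forall>c\<in>mortar_nodes D. vmort D v uh c \<in> V"
    and inv: "\<forall>w\<in>V. uofv w \<in> U"
  shows "utilde D v uofv uh c \<in> U"
  using c vol fd md inv by (cases c) (auto simp: utilde_def all_nodes_def)

context mortar_discretization
begin

lemma admissible_if_geo_degrees:
  assumes "(Ngeo \<le> deg D \<and> Ngeo \<le> Nf \<and> Ngeo \<le> Nm \<and>
          (\<forall>i<dim D. \<forall>j<dim D. tpoly (dim D) (\<lambda>_. Ngeo) (g i j)))
       \<or> (Ngeo \<le> deg D \<and> Ngeo \<le> Nf + 1 \<and> Ngeo \<le> Nm + 1 \<and>
          (\<forall>i<dim D. \<forall>j<dim D. tpoly (dim D) (\<lambda>l. if l = j then Ngeo else Ngeo - 1) (g i j)))"
    and "i < dim D" "j < dim D"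
  shows "\<exists>Dh. admissible j Dh (g i j)"
  using assms unfolding admissible_def by (elim disjE) (fastforce+)

lemma Qmet_flux_differencing_entropy_balance:
  fixes u :: "node \<Rightarrow> 'a" and v :: "'a \<Rightarrow> 'b::real_inner"
  assumes G: "\<forall>j<dim D. \<exists>Dh. admissible j Dh (g i j)"
    and div_free: "\<forall>y. (\<Sum>j<dim D. deriv (\<lambda>\<tau>. g i j (y(j := \<tau>))) (y j)) = 0"
    and uU: "\<forall>c\<in>all_nodes D. u c \<in> U"
    and consistent: "\<forall>u\<in>U. fS u u = f u"
    and symmetric: "\<forall>uL\<in>U. \<forall>uR\<in>U. fS uL uR = fS uR uL"
    and tadmor: "\<forall>uL\<in>U. \<forall>uR\<in>U. (v uL - v uR) \<bullet> fS uL uR = psi uL - psi uR"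
  shows "(\<Sum>c\<in>all_nodes D. v (u c) \<bullet> had D (Qmet D g i) fS u c)
       = (\<Sum>c\<in>mortar_nodes D. nmet D g i c * wt D c * (v (u c) \<bullet> f (u c) - psi (u c)))"
proof -
  define B where "B c = (if c \<in> mortar_nodes D then nmet D g i c * wt D c else 0)" for c
  have "(\<Sum>c\<in>all_nodes D. v (u c) \<bullet> had D (Qmet D g i) fS u c)
      = (\<Sum>c\<in>all_nodes D. B c * (v (u c) \<bullet> f (u c) - psi (u c)))"
    unfolding had_def
  proof (rule flux_differencing_entropy_balance[where U=U])
    show "Qmet D g i c e + Qmet D g i e c = (if c = e then B c else 0)" for c e
      unfolding Qmet_sbp B_def by auto
    show "(\<Sum>e\<in>all_nodes D. Qmet D g i c e) = 0" if "c \<in> all_nodes D" for c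
      by (rule Qmet_row_sum_zero[where g=g and i=i, OF that G div_free])
  qed (use uU consistent symmetric tadmor in auto)
  also have "\<dots> = (\<Sum>c\<in>mortar_nodes D. nmet D g i c * wt D c * (v (u c) \<bullet> f (u c) - psi (u c)))"
    unfolding B_def if_0_mult sum.inter_restrict[OF finite_all_nodes, symmetric]
    by (rule sum.cong) (auto simp: all_nodes_def)
  finally show ?thesis .
qed

lemma sd_term_entropy_balance:
  fixes v uofv :: "'a::real_inner \<Rightarrow> 'a"
  assumes G: "\<forall>j<dim D. \<exists>Dh. admissible j Dh (g i j)"
    and div_free: "\<forall>y. (\<Sum>j<dim D. deriv (\<lambda>\<tau>. g i j (y(j := \<tau>))) (y j)) = 0"
    and vol: "\<forall>a\<in>vol_nodes D. uh a \<in> U"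
    and fd: "\<forall>c\<in>face_nodes D. vface D v uh c \<in> V"
    and md: "\<forall>c\<in>mortar_nodes D. vmort D v uh c \<in> V"
    and inv: "\<forall>w\<in>V. uofv w \<in> U \<and> v (uofv w) = w"
    and consistent: "\<forall>u\<in>U. fS i u u = f i u"
    and symmetric: "\<forall>uL\<in>U. \<forall>uR\<in>U. fS i uL uR = fS i uR uL"
    and tadmor: "\<forall>uL\<in>U. \<forall>uR\<in>U. (v uL - v uR) \<bullet> fS i uL uR = psi i uL - psi i uR"
  shows "(\<Sum>a\<in>vol_nodes D. v (uh a) \<bullet> sd_term D g fS f fstar v uofv uh i a)
       = (\<Sum>c\<in>mortar_nodes D. nmet D g i c * wt D c * (vmort D v uh c \<bullet> fstar i c - psi i (utilde D v uofv uh c)))"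
proof -
  let ?u = "utilde D v uofv uh"
  let ?H = "had D (Qmet D g i) (fS i) ?u"
  let ?PE = "mmul D (mtr (Emat D)) (mtr (Emf D))"
  let ?n = "\<lambda>c. nmet D g i c * wt D c"
  have v_u: "(\<Sum>a\<in>vol_nodes D. Pmat D a c *\<^sub>R v (uh a)) = v (?u c)" if "c \<in> all_nodes D" for c
    using Pmat_transpose_entropy_vars[OF that fd md] inv by blast
  have v_mortar: "v (?u c) = vmort D v uh c" if "c \<in> mortar_nodes D" for c
    using that md inv by (cases c) (auto simp: utilde_def)
  have PE: "Pmat D a c = ?PE a c" if "c \<in> mortar_nodes D" for a c
    using that by (cases c) (auto simp: Pmat_def)
  have uU: "\<forall>c\<in>all_nodes D. ?u c \<in> U"
    using utilde_in_domain[OF _ vol fd md] inv by blast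
  have "(\<Sum>a\<in>vol_nodes D. v (uh a) \<bullet> sd_term D g fS f fstar v uofv uh i a)
      = (\<Sum>c\<in>all_nodes D. (\<Sum>a\<in>vol_nodes D. Pmat D a c *\<^sub>R v (uh a)) \<bullet> ?H c)
      + (\<Sum>c\<in>mortar_nodes D. ?n c *
          ((\<Sum>a\<in>vol_nodes D. Pmat D a c *\<^sub>R v (uh a)) \<bullet> (fstar i c - f i (?u c))))"
    unfolding sd_term_def
    by (simp add: inner_add_right inner_sum_right inner_sum_left sum.distrib sum_distrib_left
        sum.swap[of _ "vol_nodes D"] PE mult_ac cong: sum.cong)
  also have "\<dots> = (\<Sum>c\<in>all_nodes D. v (?u c) \<bullet> ?H c)
      + (\<Sum>c\<in>mortar_nodes D. ?n c * (vmort D v uh c \<bullet> (fstar i c - f i (?u c))))"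
    using v_u v_mortar mortar_node_in_all_nodes by simp
  also have "(\<Sum>c\<in>all_nodes D. v (?u c) \<bullet> ?H c)
      = (\<Sum>c\<in>mortar_nodes D. ?n c * (vmort D v uh c \<bullet> f i (?u c) - psi i (?u c)))"
    using Qmet_flux_differencing_entropy_balance[where g=g and i=i and fS="fS i" and f="f i" and psi="psi i", OF G div_free uU consistent symmetric tadmor] v_mortar
    by simp
  finally show ?thesis
    by (simp add: sum.distrib[symmetric] inner_diff_right algebra_simps)
qed

end

lemma deriv_compose_gradient:
  assumes S: "(S has_derivative (\<lambda>h. G \<bullet> h)) (at (u t))"
    and u: "(u has_vector_derivative u') (at t)"
  shows "deriv (\<lambda>\<tau>. S (u \<tau>)) t = G \<bullet> u'"
proof -
  have "((\<lambda>\<tau>. S (u \<tau>)) has_derivative (\<lambda>s. G \<bullet> (s *\<^sub>R u'))) (at t)"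
    using has_derivative_compose[OF u[unfolded has_vector_derivative_def] S] by simp
  then have "((\<lambda>\<tau>. S (u \<tau>)) has_field_derivative G \<bullet> u') (at t)"
    by (simp add: has_field_derivative_def mult.commute[of _ "G \<bullet> u'"])
  then show ?thesis by (rule DERIV_imp_deriv)
qed

lemma sum_inner_semidiscrete:
  fixes T :: "'i \<Rightarrow> 'x \<Rightarrow> 'a::real_inner"
  assumes "\<And>a. a \<in> A \<Longrightarrow> m a *\<^sub>R u' a + (\<Sum>i\<in>I. T i a) = 0"
  shows "(\<Sum>a\<in>A. m a * (w a \<bullet> u' a)) = - (\<Sum>i\<in>I. \<Sum>a\<in>A. w a \<bullet> T i a)"
proof -
  have "(\<Sum>a\<in>A. m a * (w a \<bullet> u' a)) = (\<Sum>a\<in>A. w a \<bullet> - (\<Sum>i\<in>I. T i a))"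
  proof (intro sum.cong refl)
    fix a assume "a \<in> A"
    then have "m a *\<^sub>R u' a = - (\<Sum>i\<in>I. T i a)"
      using assms by (simp add: eq_neg_iff_add_eq_0)
    then show "m a * (w a \<bullet> u' a) = w a \<bullet> - (\<Sum>i\<in>I. T i a)"
      by (metis inner_scaleR_right)
  qed
  then show ?thesis by (simp add: inner_sum_right sum_negf sum.swap[of _ A])
qed

theorem mainTheorem5:
  fixes D :: disc and Nf Nm Ngeo :: nat
    and g :: "nat \<Rightarrow> nat \<Rightarrow> (nat \<Rightarrow> real) \<Rightarrow> real"
    and J :: "node \<Rightarrow> real"
    and U V :: "(real^'n) set"
    and S :: "real^'n \<Rightarrow> real"
    and v uofv :: "real^'n \<Rightarrow> real^'n"
    and f :: "nat \<Rightarrow> real^'n \<Rightarrow> real^'n"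
    and fS :: "nat \<Rightarrow> real^'n \<Rightarrow> real^'n \<Rightarrow> real^'n"
    and psi :: "nat \<Rightarrow> real^'n \<Rightarrow> real"
    and t0 t1 :: real
    and uh uh' :: "real \<Rightarrow> node \<Rightarrow> real^'n"
    and fstar :: "real \<Rightarrow> nat \<Rightarrow> node \<Rightarrow> real^'n"
  assumes dim: "dim D = 2 \<or> dim D = 3"
    and degN: "1 \<le> deg D"
    and rule1D: "gauss_rule (deg D) (xs D) (ws D) \<or> lobatto_rule (deg D) (xs D) (ws D)"
    and mortar_on_face: "\<forall>k<dim D. \<forall>s. \<forall>j<nmor D k s. xmor D k s j k = sgnb s \<and>
                           (\<forall>l<dim D. -1 \<le> xmor D k s j l \<and> xmor D k s j l \<le> 1)"
    and face_exact: "\<forall>k<dim D. \<forall>s. \<forall>p. tpoly (dim D) (\<lambda>_. deg D + Nf) p \<longrightarrow>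
                       (\<Sum>c\<in>face_nodes_of D k s. wt D c * p (pt D c)) = face_int (dim D) k s p"
    and mortar_exact: "\<forall>k<dim D. \<forall>s. \<forall>p. tpoly (dim D) (\<lambda>_. deg D + Nm) p \<longrightarrow>
                       (\<Sum>c\<in>mortar_nodes_of D k s. wt D c * p (pt D c)) = face_int (dim D) k s p"
    and div_free: "\<forall>i<dim D. \<forall>y. (\<Sum>j<dim D. deriv (\<lambda>\<tau>. g i j (y(j := \<tau>))) (y j)) = 0"
    and Ngeo1: "1 \<le> Ngeo"
    and geo_deg:
      "(Ngeo \<le> deg D \<and> Ngeo \<le> Nf \<and> Ngeo \<le> Nm \<and>
          (\<forall>i<dim D. \<forall>j<dim D. tpoly (dim D) (\<lambda>_. Ngeo) (g i j)))
       \<or> (Ngeo \<le> deg D \<and> Ngeo \<le> Nf + 1 \<and> Ngeo \<le> Nm + 1 \<and>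
          (\<forall>i<dim D. \<forall>j<dim D. tpoly (dim D) (\<lambda>l. if l = j then Ngeo else Ngeo - 1) (g i j)))"
    and Jpos: "\<forall>a\<in>vol_nodes D. 0 < J a"
    and U_open: "open U" and U_convex: "convex U"
    and S_convex: "convex_on U S"
    and S_grad: "\<forall>u\<in>U. (S has_derivative (\<lambda>h. v u \<bullet> h)) (at u)"
    and v_inv1: "\<forall>u\<in>U. v u \<in> V \<and> uofv (v u) = u"
    and v_inv2: "\<forall>w\<in>V. uofv w \<in> U \<and> v (uofv w) = w"
    and ec_consistent: "\<forall>i<dim D. \<forall>u\<in>U. fS i u u = f i u"
    and ec_symmetric: "\<forall>i<dim D. \<forall>uL\<in>U. \<forall>uR\<in>U. fS i uL uR = fS i uR uL"
    and ec_tadmor: "\<forall>i<dim D. \<forall>uL\<in>U. \<forall>uR\<in>U.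
                      (v uL - v uR) \<bullet> fS i uL uR = psi i uL - psi i uR"
    and t01: "t0 < t1"
    and uh_dom: "\<forall>t\<in>{t0<..<t1}. \<forall>a\<in>vol_nodes D. uh t a \<in> U"
    and uh_diff: "\<forall>t\<in>{t0<..<t1}. \<forall>a\<in>vol_nodes D.
                    ((\<lambda>\<tau>. uh \<tau> a) has_vector_derivative uh' t a) (at t)"
    and face_defined: "\<forall>t\<in>{t0<..<t1}. \<forall>c\<in>face_nodes D. vface D v (uh t) c \<in> V"
    and mortar_defined: "\<forall>t\<in>{t0<..<t1}. \<forall>c\<in>mortar_nodes D. vmort D v (uh t) c \<in> V"
    and semidiscrete: "\<forall>t\<in>{t0<..<t1}. \<forall>a\<in>vol_nodes D.
         (wt D a * J a) *\<^sub>R uh' t a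
         + (\<Sum>i<dim D. sd_term D g fS f (fstar t) v uofv (uh t) i a) = 0"
  shows "\<forall>t\<in>{t0<..<t1}.
           (\<Sum>a\<in>vol_nodes D. wt D a * J a * deriv (\<lambda>\<tau>. S (uh \<tau> a)) t)
         + (\<Sum>i<dim D. \<Sum>c\<in>mortar_nodes D. nmet D g i c * wt D c *
              (vmort D v (uh t) c \<bullet> fstar t i c - psi i (utilde D v uofv (uh t) c))) = 0"
proof
  fix t assume t: "t \<in> {t0<..<t1}"
  interpret mortar_discretization D Nf Nm
    using exact_quadrature_if_gauss_or_lobatto[OF rule1D] mortar_on_face face_exact mortar_exact
    by (simp add: mortar_discretization_def mortar_discretization_axioms_def)
  have balance: "(\<Sum>a\<in>vol_nodes D. v (uh t a) \<bullet> sd_term D g fS f (fstar t) v uofv (uh t) i a)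
      = (\<Sum>c\<in>mortar_nodes D. nmet D g i c * wt D c *
           (vmort D v (uh t) c \<bullet> fstar t i c - psi i (utilde D v uofv (uh t) c)))" if i: "i < dim D" for i
  proof (rule sd_term_entropy_balance[where U=U and V=V])
    show "\<forall>j<dim D. \<exists>Dh. admissible j Dh (g i j)"
      using admissible_if_geo_degrees[OF geo_deg i] by blast
    show "\<forall>y. (\<Sum>j<dim D. deriv (\<lambda>\<tau>. g i j (y(j := \<tau>))) (y j)) = 0"
      using div_free i by blast
  qed (use uh_dom face_defined mortar_defined v_inv2 ec_consistent ec_symmetric ec_tadmor i t in auto)
  have rate: "deriv (\<lambda>\<tau>. S (uh \<tau> a)) t = v (uh t a) \<bullet> uh' t a" if "a \<in> vol_nodes D" for a
    using deriv_compose_gradient S_grad uh_dom uh_diff t that by blast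
  have "(\<Sum>a\<in>vol_nodes D. wt D a * J a * (v (uh t a) \<bullet> uh' t a))
      = - (\<Sum>i<dim D. \<Sum>a\<in>vol_nodes D. v (uh t a) \<bullet> sd_term D g fS f (fstar t) v uofv (uh t) i a)"
    using semidiscrete t by (intro sum_inner_semidiscrete) auto
  then show "(\<Sum>a\<in>vol_nodes D. wt D a * J a * deriv (\<lambda>\<tau>. S (uh \<tau> a)) t)
         + (\<Sum>i<dim D. \<Sum>c\<in>mortar_nodes D. nmet D g i c * wt D c *
              (vmort D v (uh t) c \<bullet> fstar t i c - psi i (utilde D v uofv (uh t) c))) = 0"
    using balance rate by simp
qed

end
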